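(* Let $n\ge1$. For $i\ge0$ let $E_i^{+}\in\mathbb{Q}[\mathfrak{B}_n]$ be the sum of all signed permutations $\pi\in\mathfrak{B}_n$ with $\operatorname{pe}_B(\pi)=i$ and $\pi(1)>0$, and $E_i^{-}$ the sum of those with $\operatorname{pe}_B(\pi)=i$ and $\pi(1)<0$. The linear span $\mathfrak{p}_{B,n}$ of all $E_i^{+},E_i^{-}$ ($0\le i\le\lfloor n/2\rfloor$) is a commutative subalgebra of $\mathbb{Q}[\mathfrak{B}_n]$ of dimension $n+1$.
   Context: $\mathfrak{B}_n$ is the group of signed permutations of $\{\pm1,\dots,\pm n\}$ (bijections $\pi$ of $\{-n,\dots,n\}$ with $\pi(-i)=-\pi(i)$), with $\pi(0)=0$ and multiplication in $\mathbb{Q}[\mathfrak{B}_n]$ given by composition. A peak of $\pi\in\mathfrak{B}_n$ is a position $i\in\{1,\dots,n-1\}$ with $\pi(i-1)<\pi(i)>\pi(i+1)$; $\operatorname{pe}_B(\pi)$ is the number of peaks. *)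

theory Defs
  imports Complex_Main "HOL-Library.Function_Algebras"
begin

(* Signed permutations of {-n..n}, as functions int => int that are the identity
   outside [-n,n]. pi(0)=0 follows from oddness. *)
definition signed_perms :: "nat \<Rightarrow> (int \<Rightarrow> int) set" where
  "signed_perms n = {\<pi>. bij_betw \<pi> {- int n..int n} {- int n..int n}
                       \<and> (\<forall>i. \<pi> (- i) = - \<pi> i)
                       \<and> (\<forall>i. \<bar>i\<bar> > int n \<longrightarrow> \<pi> i = i)}"

(* peaks: positions i in {1..n-1} with pi(i-1) < pi(i) > pi(i+1), using pi(0)=0 *)
definition peB :: "nat \<Rightarrow> (int \<Rightarrow> int) \<Rightarrow> nat" where
  "peB n \<pi> = card {i \<in> {1..int n - 1}. \<pi> (i - 1) < \<pi> i \<and> \<pi> i > \<pi> (i + 1)}"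

(* Elements of Q[B_n]: coefficient functions (int => int) => rat supported on B_n. *)
definition gmult :: "nat \<Rightarrow> ((int \<Rightarrow> int) \<Rightarrow> rat) \<Rightarrow> ((int \<Rightarrow> int) \<Rightarrow> rat) \<Rightarrow> ((int \<Rightarrow> int) \<Rightarrow> rat)" where
  "gmult n a b = (\<lambda>\<sigma>. \<Sum>(\<pi>, \<tau>) \<in> {(\<pi>, \<tau>) \<in> signed_perms n \<times> signed_perms n. \<pi> \<circ> \<tau> = \<sigma>}. a \<pi> * b \<tau>)"

definition Eplus :: "nat \<Rightarrow> nat \<Rightarrow> ((int \<Rightarrow> int) \<Rightarrow> rat)" where
  "Eplus n i = (\<lambda>\<pi>. if \<pi> \<in> signed_perms n \<and> peB n \<pi> = i \<and> \<pi> 1 > 0 then 1 else 0)"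

definition Eminus :: "nat \<Rightarrow> nat \<Rightarrow> ((int \<Rightarrow> int) \<Rightarrow> rat)" where
  "Eminus n i = (\<lambda>\<pi>. if \<pi> \<in> signed_perms n \<and> peB n \<pi> = i \<and> \<pi> 1 < 0 then 1 else 0)"

definition qscale :: "rat \<Rightarrow> ('a \<Rightarrow> rat) \<Rightarrow> ('a \<Rightarrow> rat)" where
  "qscale c f = (\<lambda>x. c * f x)"

global_interpretation qv: vector_space "qscale :: rat \<Rightarrow> ('a \<Rightarrow> rat) \<Rightarrow> ('a \<Rightarrow> rat)"
  by unfold_locales (auto simp: qscale_def fun_eq_iff algebra_simps)

definition peak_algebra_B :: "nat \<Rightarrow> ((int \<Rightarrow> int) \<Rightarrow> rat) set" where
  "peak_algebra_B n = qv.span ({Eplus n i | i. i \<le> n div 2} \<union> {Eminus n i | i. i \<le> n div 2})"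

end

(*
  For odd N, let \<rho>\<^sub>N be the sum over all colourings u : {1..n} \<rightarrow> {1..N} of the signed
  permutation that sorts the positions -n..n by colour, where u is extended by
  colour(-i) = N + 1 - colour(i) and colour(0) = (N + 1)/2, and ties are broken increasingly
  in odd and decreasingly in even colours.  Reading a colour in {1..NM} as a block in {1..M}
  together with a position inside the block (boustrophedon) gives \<rho>\<^sub>N \<rho>\<^sub>M = \<rho>\<^sub>N\<^sub>M, so the
  span of the \<rho>\<^sub>N is a commutative subalgebra.

  The coefficient of \<sigma> in \<rho>\<^sub>N counts colour chains along the ascent/descent word of \<sigma>.  These
  counts are products of transfer matrices, which satisfy UUD = UDD and DUU = DDU; hence they
  only depend on the peak index 2 pe\<^sub>B(\<sigma>) + [\<sigma>(1) < 0] of \<sigma>, whose classes are the E\<^sub>i\<^sup>\<plusminus>.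
  For N = 2t + 1 a chain starts at the middle colour t + 1 and has to climb at every change of
  letter, so the coefficient of a class of index s vanishes for s > t and is positive for s = t.
  This triangularity shows that the \<rho>\<^sub>N span the same space as the n + 1 (nonempty, disjoint)
  peak classes.
*)

theory Submission
  imports Defs "HOL-Library.FuncSet"
begin

section \<open>Transfer operators on words\<close>

text \<open>Colours read along a signed permutation weakly increase; a colour \<open>y\<close> may repeat across
  an ascent (\<open>s = True\<close>) iff \<open>y\<close> is odd, across a descent iff \<open>y\<close> is even.\<close>

definition chain_step :: "bool \<Rightarrow> int \<Rightarrow> int \<Rightarrow> bool" where
  "chain_step s y z \<longleftrightarrow> y < z \<or> (y = z \<and> (odd y \<longleftrightarrow> s))"

definition transfer :: "int \<Rightarrow> bool \<Rightarrow> (int \<Rightarrow> int) \<Rightarrow> int \<Rightarrow> int" where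
  "transfer N s l = (\<lambda>z. if z \<in> {1..N} then (\<Sum>y\<in>{1..N}. if chain_step s y z then l y else 0) else 0)"

definition alt_sign :: "int \<Rightarrow> int" where
  "alt_sign y = (if odd y then 1 else -1)"

lemma sum_alt_sign_even_length: "(\<Sum>y\<in>{a..a + 2 * int k - 1}. alt_sign y) = 0"
proof (induction k)
  case (Suc k)
  have "{a..a + 2 * int (Suc k) - 1}
      = insert (a + 2 * int k + 1) (insert (a + 2 * int k) {a..a + 2 * int k - 1})"
    by auto
  then show ?case using Suc by (simp add: alt_sign_def)
qed simp

lemma sum_alt_sign_interval:
  assumes "odd (a + b)"
  shows "(\<Sum>y\<in>{a..b}. alt_sign y) = 0"
proof (cases "b < a")
  case False
  from assms have "even (b - a + 1)" by presburger
  then obtain c where c: "b - a + 1 = 2 * c" by (rule evenE)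
  with False have "b = a + 2 * int (nat c) - 1" by simp
  then show ?thesis using sum_alt_sign_even_length[of a "nat c"] by (simp only:)
qed simp

lemma sum_alt_sign_turn:
  assumes "x \<in> {1..N}" "z \<in> {1..N}"
  shows "(\<Sum>y\<in>{1..N}. if chain_step s x y \<and> chain_step (\<not> s) y z then alt_sign y else 0) = 0"
proof -
  define lo where "lo = (if odd x \<longleftrightarrow> s then x else x + 1)"
  define hi where "hi = (if odd z \<longleftrightarrow> s then z - 1 else z)"
  have "{y \<in> {1..N}. chain_step s x y \<and> chain_step (\<not> s) y z} = {lo..hi}"
    using assms unfolding lo_def hi_def chain_step_def by auto
  moreover have "odd (lo + hi)" unfolding lo_def hi_def by auto
  ultimately show ?thesis by (simp add: sum.If_cases Int_def sum_alt_sign_interval)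
qed

lemma sum_alt_sign_descent_top:
  assumes "x \<in> {1..N}" "odd N"
  shows "(\<Sum>y\<in>{1..N}. if chain_step False x y then alt_sign y else 0) = 0"
proof -
  define lo where "lo = (if even x then x else x + 1)"
  have "{y \<in> {1..N}. chain_step False x y} = {lo..N}"
    using assms unfolding lo_def chain_step_def by auto
  moreover have "odd (lo + N)" using assms unfolding lo_def by auto
  ultimately show ?thesis by (simp add: sum.If_cases Int_def sum_alt_sign_interval)
qed

lemma transfer_cong: "(\<And>y. y \<in> {1..N} \<Longrightarrow> l y = l' y) \<Longrightarrow> transfer N s l = transfer N s l'"
  by (auto simp: transfer_def fun_eq_iff intro!: sum.cong)

lemma transfer_diff: "transfer N s (l - l') = transfer N s l - transfer N s l'"
  by (auto simp: transfer_def fun_eq_iff sum_subtractf[symmetric] intro!: sum.cong)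

lemma transfer_ascent_minus_descent:
  assumes "y \<in> {1..N}"
  shows "(transfer N True l - transfer N False l) y = alt_sign y * l y"
proof -
  have "(transfer N True l - transfer N False l) y =
      (\<Sum>x\<in>{1..N}. (if chain_step True x y then l x else 0) - (if chain_step False x y then l x else 0))"
    using assms by (simp add: transfer_def sum_subtractf)
  also have "\<dots> = (\<Sum>x\<in>{1..N}. if x = y then alt_sign y * l y else 0)"
    by (rule sum.cong) (auto simp: chain_step_def alt_sign_def)
  finally show ?thesis using assms by simp
qed

lemma transfer_alt_sign_turn: "transfer N (\<not> s) (\<lambda>y. alt_sign y * transfer N s l y) = 0"
proof
  fix z
  let ?turn = "\<lambda>x y. chain_step s x y \<and> chain_step (\<not> s) y z"
  show "transfer N (\<not> s) (\<lambda>y. alt_sign y * transfer N s l y) z = 0 z"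
  proof (cases "z \<in> {1..N}")
    case True
    have "transfer N (\<not> s) (\<lambda>y. alt_sign y * transfer N s l y) z
        = (\<Sum>y\<in>{1..N}. \<Sum>x\<in>{1..N}. if ?turn x y then l x * alt_sign y else 0)"
      using True by (auto simp: transfer_def sum_distrib_left intro!: sum.cong)
    also have "\<dots> = (\<Sum>x\<in>{1..N}. l x * (\<Sum>y\<in>{1..N}. if ?turn x y then alt_sign y else 0))"
      by (subst sum.swap) (auto simp: sum_distrib_left intro!: sum.cong)
    finally show ?thesis using True by (simp add: sum_alt_sign_turn)
  qed (auto simp: transfer_def)
qed

text \<open>On words read from left to right (\<open>U = True\<close>, \<open>D = False\<close>) the next lemma is the
  pair of relations \<open>UUD = UDD\<close> and \<open>DUU = DDU\<close>.\<close>

lemma transfer_turn: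
  "transfer N (\<not> s) (transfer N True (transfer N s l))
      = transfer N (\<not> s) (transfer N False (transfer N s l))"
proof -
  let ?m = "transfer N s l"
  have "transfer N (\<not> s) (transfer N True ?m) - transfer N (\<not> s) (transfer N False ?m)
      = transfer N (\<not> s) (\<lambda>y. alt_sign y * ?m y)"
    unfolding transfer_diff[symmetric] by (rule transfer_cong) (rule transfer_ascent_minus_descent)
  then show ?thesis by (simp add: transfer_alt_sign_turn)
qed

lemma sum_transfer_descent_ascent:
  assumes "odd N"
  shows "(\<Sum>z\<in>{1..N}. transfer N True (transfer N False l) z)
      = (\<Sum>z\<in>{1..N}. transfer N False (transfer N False l) z)"
proof -
  let ?m = "transfer N False l"
  have "(\<Sum>z\<in>{1..N}. transfer N True ?m z) - (\<Sum>z\<in>{1..N}. transfer N False ?m z)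
      = (\<Sum>z\<in>{1..N}. alt_sign z * ?m z)"
    using transfer_ascent_minus_descent[of _ N ?m] by (simp add: sum_subtractf[symmetric])
  also have "\<dots> = (\<Sum>z\<in>{1..N}. \<Sum>x\<in>{1..N}. if chain_step False x z then l x * alt_sign z else 0)"
    by (auto simp: transfer_def sum_distrib_left mult.commute intro!: sum.cong)
  also have "\<dots> = (\<Sum>x\<in>{1..N}. l x * (\<Sum>z\<in>{1..N}. if chain_step False x z then alt_sign z else 0))"
    by (subst sum.swap) (auto simp: sum_distrib_left intro!: sum.cong)
  finally show ?thesis using assms by (simp add: sum_alt_sign_descent_top)
qed

definition transfer_word :: "int \<Rightarrow> (int \<Rightarrow> int) \<Rightarrow> bool list \<Rightarrow> int \<Rightarrow> int" where
  "transfer_word N l w = foldl (\<lambda>l s. transfer N s l) l w"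

definition transfer_total :: "int \<Rightarrow> (int \<Rightarrow> int) \<Rightarrow> bool list \<Rightarrow> int" where
  "transfer_total N l w = (\<Sum>z\<in>{1..N}. transfer_word N l w z)"

lemma transfer_word_Nil [simp]: "transfer_word N l [] = l"
  by (simp add: transfer_word_def)

lemma transfer_word_append: "transfer_word N l (w @ w') = transfer_word N (transfer_word N l w) w'"
  by (simp add: transfer_word_def)

lemma transfer_word_snoc: "transfer_word N l (w @ [s]) = transfer N s (transfer_word N l w)"
  by (simp add: transfer_word_def)

lemma transfer_word_Cons: "transfer_word N l (s # w) = transfer_word N (transfer N s l) w"
  by (simp add: transfer_word_def)

lemma transfer_total_descent_ascent:
  "odd N \<Longrightarrow> transfer_total N l (w @ [False, True]) = transfer_total N l (w @ [False, False])"
  using sum_transfer_descent_ascent[of N "transfer_word N l w"]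
  by (simp add: transfer_total_def transfer_word_def)

definition word_equiv :: "int \<Rightarrow> bool list \<Rightarrow> bool list \<Rightarrow> bool" where
  "word_equiv N w w' \<longleftrightarrow> (\<forall>l. transfer_word N l w = transfer_word N l w')"

lemma word_equiv_refl [simp]: "word_equiv N w w"
  by (simp add: word_equiv_def)

lemma word_equiv_trans [trans]: "word_equiv N w w' \<Longrightarrow> word_equiv N w' w'' \<Longrightarrow> word_equiv N w w''"
  by (simp add: word_equiv_def)

lemma word_equiv_app: "word_equiv N w w' \<Longrightarrow> word_equiv N (a @ w @ b) (a @ w' @ b)"
  by (simp add: word_equiv_def transfer_word_append)

lemma word_equiv_transfer_total: "word_equiv N w w' \<Longrightarrow> transfer_total N l w = transfer_total N l w'"
  by (simp add: word_equiv_def transfer_total_def)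

lemma word_equiv_UDD: "word_equiv N (a @ True # False # False # b) (a @ True # True # False # b)"
  using word_equiv_app[of N "[True, False, False]" "[True, True, False]" a b] transfer_turn[of N True]
  by (simp add: word_equiv_def transfer_word_def)

lemma word_equiv_DUU: "word_equiv N (a @ False # True # True # b) (a @ False # False # True # b)"
  using word_equiv_app[of N "[False, True, True]" "[False, False, True]" a b] transfer_turn[of N False]
  by (simp add: word_equiv_def transfer_word_def)

definition zigzag :: "nat \<Rightarrow> bool list" where
  "zigzag p = concat (replicate p [True, False])"

lemma zigzag_0 [simp]: "zigzag 0 = []"
  by (simp add: zigzag_def)

lemma zigzag_Suc: "zigzag (Suc p) = True # False # zigzag p"
  by (simp add: zigzag_def)

lemma zigzag_Suc': "zigzag (Suc p) = zigzag p @ [True, False]"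
  by (induction p) (auto simp: zigzag_def)

lemma hd_zigzag_append_True: "hd (zigzag p @ True # v)"
  by (cases p) (simp_all add: zigzag_Suc)

lemma word_equiv_zigzag_UUD:
  "word_equiv N (zigzag p @ [True, True, False]) (True # True # False # zigzag p)"
proof (induction p)
  case (Suc p)
  have "word_equiv N (zigzag (Suc p) @ [True, True, False])
      (True # False # True # True # False # zigzag p)"
    using word_equiv_app[OF Suc, of "[True, False]" "[]"] by (simp add: zigzag_Suc)
  also have "word_equiv N \<dots> (True # False # False # True # False # zigzag p)"
    using word_equiv_DUU[of N "[True]" "False # zigzag p"] by simp
  also have "word_equiv N \<dots> (True # True # False # True # False # zigzag p)"
    using word_equiv_UDD[of N "[]" "True # False # zigzag p"] by simp
  finally show ?case by (simp add: zigzag_Suc)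
qed simp

lemma word_equiv_zigzag_descent:
  assumes "p \<ge> 1"
  shows "word_equiv N (zigzag p @ [False]) (True # zigzag p)"
proof -
  obtain q where q: "p = Suc q" using assms by (cases p) auto
  have "word_equiv N (zigzag p @ [False]) (zigzag q @ [True, True, False])"
    using word_equiv_UDD[of N "zigzag q" "[]"] q by (simp add: zigzag_Suc')
  also have "word_equiv N \<dots> (True # True # False # zigzag q)"
    by (rule word_equiv_zigzag_UUD)
  finally show ?thesis using q by (simp add: zigzag_Suc)
qed

lemma word_equiv_zigzag_ascent_ascent:
  "word_equiv N (zigzag p @ [True, True]) (True # zigzag p @ [True])"
proof (cases p)
  case (Suc q)
  have "word_equiv N (zigzag p @ [True, True]) (zigzag q @ [True, False, False, True])"
    using word_equiv_DUU[of N "zigzag q @ [True]" "[]"] Suc by (simp add: zigzag_Suc')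
  also have "word_equiv N \<dots> (zigzag q @ [True, True, False, True])"
    using word_equiv_UDD[of N "zigzag q" "[True]"] by simp
  also have "word_equiv N \<dots> (True # True # False # zigzag q @ [True])"
    using word_equiv_app[OF word_equiv_zigzag_UUD[of N q], of "[]" "[True]"] by simp
  finally show ?thesis using Suc by (simp add: zigzag_Suc)
qed simp

text \<open>Normal form of a nonempty word: \<open>f\<^sup>k (UD)\<^sup>p\<close>, followed by \<open>U\<close> if the word ends with
  an ascent, where \<open>f\<close> is its first letter and \<open>p\<close> its number of peaks.\<close>

definition canonical_word :: "bool \<Rightarrow> bool \<Rightarrow> nat \<Rightarrow> nat \<Rightarrow> bool list" where
  "canonical_word f l p k = replicate k f @ zigzag p @ (if l then [True] else [])"

lemma word_equiv_absorb_ascent: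
  assumes "f \<or> k \<ge> 1" "v \<noteq> []" "hd v"
  shows "word_equiv N (replicate k f @ True # v) (replicate (Suc k) f @ v)"
proof (cases f)
  case False
  with assms obtain k' v' where "k = Suc k'" "v = True # v'" by (cases k; cases v) auto
  then show ?thesis
    using False word_equiv_DUU[of N "replicate k' False" v'] by (simp add: replicate_app_Cons_same)
qed (simp add: replicate_app_Cons_same)

lemma canonical_word_snoc:
  assumes "f \<or> k \<ge> 1" and "l \<or> p \<ge> 1 \<or> \<not> f"
  shows "word_equiv N (canonical_word f l p k @ [x])
           (canonical_word f x (p + of_bool (l \<and> \<not> x)) (k + of_bool (l = x)))"
proof (cases l; cases x)
  assume "l" "x"
  have "word_equiv N (canonical_word f l p k @ [x]) (replicate k f @ True # zigzag p @ [True])"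
    using word_equiv_app[OF word_equiv_zigzag_ascent_ascent[of N p], of "replicate k f" "[]"] \<open>l\<close> \<open>x\<close>
    by (simp add: canonical_word_def)
  also have "word_equiv N \<dots> (replicate (Suc k) f @ zigzag p @ [True])"
    using assms(1) by (rule word_equiv_absorb_ascent) (simp_all add: hd_zigzag_append_True)
  finally show ?thesis using \<open>l\<close> \<open>x\<close> by (simp add: canonical_word_def)
next
  assume "\<not> l" "\<not> x"
  show ?thesis
  proof (cases "p = 0")
    case True
    then show ?thesis using assms(2) \<open>\<not> l\<close> \<open>\<not> x\<close>
      by (simp add: canonical_word_def replicate_append_same)
  next
    case False
    have "word_equiv N (canonical_word f l p k @ [x]) (replicate k f @ True # zigzag p)"
      using word_equiv_app[OF word_equiv_zigzag_descent[of p N], of "replicate k f" "[]"]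
      False \<open>\<not> l\<close> \<open>\<not> x\<close>
      by (simp add: canonical_word_def)
    also have "word_equiv N \<dots> (replicate (Suc k) f @ zigzag p)"
      using assms(1) False
      by (intro word_equiv_absorb_ascent) (simp_all add: zigzag_def hd_concat hd_replicate)
    finally show ?thesis using \<open>\<not> l\<close> \<open>\<not> x\<close> by (simp add: canonical_word_def)
  qed
qed (simp_all add: canonical_word_def zigzag_Suc')

fun word_peaks :: "bool list \<Rightarrow> nat" where
  "word_peaks (x # y # w) = of_bool (x \<and> \<not> y) + word_peaks (y # w)"
| "word_peaks _ = 0"

lemma word_peaks_snoc: "word_peaks (w @ [x]) = word_peaks w + of_bool (w \<noteq> [] \<and> last w \<and> \<not> x)"
  by (induction w rule: word_peaks.induct) auto

lemma word_peaks_Cons: "w \<noteq> [] \<Longrightarrow> word_peaks (x # w) = of_bool (x \<and> \<not> hd w) + word_peaks w"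
  by (cases w) auto

lemma word_peaks_length_bound:
  "w \<noteq> [] \<Longrightarrow> 2 * word_peaks w + of_bool (\<not> hd w) + of_bool (last w) \<le> length w"
proof (induction w rule: rev_induct)
  case (snoc x v)
  then show ?case by (cases "v = []") (auto simp: word_peaks_snoc)
qed simp

lemma word_peaks_pos: "w \<noteq> [] \<Longrightarrow> hd w \<Longrightarrow> \<not> last w \<Longrightarrow> word_peaks w \<ge> 1"
proof (induction w rule: rev_induct)
  case (snoc x v)
  then show ?case by (cases "v = []") (auto simp: word_peaks_snoc)
qed simp

lemma word_equiv_canonical_word:
  "w \<noteq> [] \<Longrightarrow> word_equiv N w
     (canonical_word (hd w) (last w) (word_peaks w) (length w - 2 * word_peaks w - of_bool (last w)))"
proof (induction w rule: rev_induct)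
  case (snoc x v)
  show ?case
  proof (cases "v = []")
    case True
    then show ?thesis by (simp add: canonical_word_def)
  next
    case False
    let ?k = "length v - 2 * word_peaks v - of_bool (last v)"
    have bound: "2 * word_peaks v + of_bool (\<not> hd v) + of_bool (last v) \<le> length v"
      using word_peaks_length_bound[OF False] .
    have "word_equiv N (v @ [x]) (canonical_word (hd v) (last v) (word_peaks v) ?k @ [x])"
      using word_equiv_app[OF snoc.IH[OF False], of "[]" "[x]"] by simp
    also have "word_equiv N \<dots>
        (canonical_word (hd v) x (word_peaks v + of_bool (last v \<and> \<not> x)) (?k + of_bool (last v = x)))"
      by (rule canonical_word_snoc)
        (use bound word_peaks_pos[OF False] in \<open>auto simp: of_bool_def split: if_splits\<close>)
    also have "\<dots> = canonical_word (hd (v @ [x])) (last (v @ [x])) (word_peaks (v @ [x]))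
        (length (v @ [x]) - 2 * word_peaks (v @ [x]) - of_bool (last (v @ [x])))"
      using bound False by (auto simp: word_peaks_snoc)
    finally show ?thesis .
  qed
qed simp

lemma transfer_total_canonical_word_last:
  assumes N: "odd N" and "f \<or> k \<ge> 1"
  shows "transfer_total N l (canonical_word f True p k)
      = transfer_total N l (canonical_word f False p (Suc k))"
proof (cases p)
  case 0
  show ?thesis
  proof (cases f)
    case False
    then obtain k' where "k = Suc k'" using assms by (cases k) auto
    then show ?thesis
      using 0 False transfer_total_descent_ascent[OF N, of l "replicate k' False"]
      by (simp add: canonical_word_def replicate_app_Cons_same replicate_append_same)
  qed (simp add: 0 canonical_word_def replicate_append_same)
next
  case (Suc q)
  have "transfer_total N l (canonical_word f True p k)
      = transfer_total N l ((replicate k f @ zigzag q @ [True]) @ [False, True])"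
    using Suc by (simp add: canonical_word_def zigzag_Suc')
  also have "\<dots> = transfer_total N l ((replicate k f @ zigzag q @ [True]) @ [False, False])"
    by (rule transfer_total_descent_ascent[OF N])
  also have "\<dots> = transfer_total N l (replicate (Suc k) f @ zigzag p)"
  proof (rule word_equiv_transfer_total)
    have "word_equiv N ((replicate k f @ zigzag q @ [True]) @ [False, False])
        (replicate k f @ True # zigzag p)"
      using word_equiv_app[OF word_equiv_zigzag_descent[of p N], of "replicate k f" "[]"] Suc
      by (simp add: zigzag_Suc')
    also have "word_equiv N \<dots> (replicate (Suc k) f @ zigzag p)"
      using assms(2) Suc by (intro word_equiv_absorb_ascent) (simp_all add: zigzag_Suc)
    finally show "word_equiv N ((replicate k f @ zigzag q @ [True]) @ [False, False]) (replicate
        (Suc k) f @ zigzag p)" .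
  qed
  finally show ?thesis by (simp add: canonical_word_def)
qed

lemma transfer_total_word_invariant:
  assumes N: "odd N" and "w \<noteq> []" "length w' = length w" "hd w' = hd w" "word_peaks w' = word_peaks w"
  shows "transfer_total N l w' = transfer_total N l w"
proof -
  let ?p = "word_peaks w"
  have canonical: "transfer_total N l v
      = transfer_total N l (canonical_word (hd w) False ?p (length w - 2 * ?p))"
    if v: "v \<in> {w, w'}" for v
  proof -
    have v_props: "v \<noteq> []" "hd v = hd w" "word_peaks v = ?p" "length v = length w"
      using v assms by auto
    have eq: "transfer_total N l v
        = transfer_total N l (canonical_word (hd w) (last v) ?p (length w - 2 * ?p - of_bool (last v)))"
      using word_equiv_transfer_total[OF word_equiv_canonical_word[OF v_props(1)]] v_props by simp
    show ?thesis
    proof (cases "last v")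
      case True
      have "2 * ?p + of_bool (\<not> hd w) + 1 \<le> length w"
        using word_peaks_length_bound[OF v_props(1)] v_props True by simp
      then have "hd w \<or> length w - 2 * ?p - 1 \<ge> 1" "Suc (length w - 2 * ?p - 1) = length w - 2 * ?p"
        by (auto simp: of_bool_def split: if_splits)
      then show ?thesis
        using eq True transfer_total_canonical_word_last[OF N, of "hd w" "length w - 2 * ?p - 1" l ?p]
        by simp
    qed (use eq in simp)
  qed
  show ?thesis using canonical[of w] canonical[of w'] by simp
qed

lemma transfer_nonneg: "(\<And>y. l y \<ge> 0) \<Longrightarrow> transfer N s l z \<ge> 0"
  by (auto simp: transfer_def intro!: sum_nonneg)

lemma transfer_word_nonneg: "(\<And>y. l y \<ge> 0) \<Longrightarrow> transfer_word N l w z \<ge> 0"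
  by (induction w arbitrary: z rule: rev_induct) (simp_all add: transfer_word_snoc transfer_nonneg)

lemma transfer_pos:
  assumes "\<And>y. l y \<ge> 0" "z \<in> {1..N}" "y \<in> {1..N}" "chain_step s y z" "l y > 0"
  shows "transfer N s l z > 0"
proof -
  have "0 < (if chain_step s y z then l y else 0)" using assms by simp
  also have "\<dots> \<le> (\<Sum>y\<in>{1..N}. if chain_step s y z then l y else 0)"
    by (rule member_le_sum) (use assms in auto)
  finally show ?thesis using assms by (simp add: transfer_def)
qed

lemma transfer_nonzeroD:
  assumes "transfer N s l z \<noteq> 0"
  obtains y where "z \<in> {1..N}" "y \<in> {1..N}" "chain_step s y z" "l y \<noteq> 0"
proof -
  have z: "z \<in> {1..N}" using assms by (auto simp: transfer_def split: if_splits)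
  then have "(\<Sum>y\<in>{1..N}. if chain_step s y z then l y else 0) \<noteq> 0" using assms
    by (simp add: transfer_def)
  then obtain y where "y \<in> {1..N}" "(if chain_step s y z then l y else 0) \<noteq> 0"
    by (rule sum.not_neutral_contains_not_neutral)
  with z show thesis by (intro that) (auto split: if_splits)
qed

lemma transfer_word_outside: "w \<noteq> [] \<Longrightarrow> z \<notin> {1..N} \<Longrightarrow> transfer_word N l w z = 0"
  by (induction w rule: rev_induct) (auto simp: transfer_word_snoc transfer_def)

fun word_changes :: "bool list \<Rightarrow> nat" where
  "word_changes (x # y # w) = of_bool (x \<noteq> y) + word_changes (y # w)"
| "word_changes _ = 0"

lemma word_changes_snoc: "word_changes (w @ [x]) = word_changes w + of_bool (w \<noteq> [] \<and> last w \<noteq> x)"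
  by (induction w rule: word_changes.induct) auto

lemma word_peaks_le_changes: "w \<noteq> [] \<Longrightarrow> 2 * word_peaks w \<le> word_changes w + of_bool (hd w)"
  by (induction w rule: word_peaks.induct) auto

text \<open>Every change of letter forces a chain to climb by at least one colour.\<close>

lemma transfer_word_support:
  assumes "\<And>y. l y \<noteq> 0 \<Longrightarrow> y = x\<^sub>0"
  shows "transfer_word N l w y \<noteq> 0 \<Longrightarrow>
    y - x\<^sub>0 \<ge> int (word_changes (odd x\<^sub>0 # w)) + of_bool (odd y \<noteq> last (odd x\<^sub>0 # w))"
proof (induction w arbitrary: y rule: rev_induct)
  case (snoc s w)
  obtain y' where y': "chain_step s y' y" "transfer_word N l w y' \<noteq> 0"
    using snoc.prems by (auto simp: transfer_word_snoc elim: transfer_nonzeroD)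
  have "word_changes (odd x\<^sub>0 # w @ [s]) = word_changes (odd x\<^sub>0 # w) + of_bool (last (odd x\<^sub>0 # w) \<noteq> s)"
    using word_changes_snoc[of "odd x\<^sub>0 # w" s] by simp
  then show ?case
    using snoc.IH[OF y'(2)] y'(1) unfolding chain_step_def
    by (cases "y = y' + 1") (auto simp: of_bool_def split: if_splits)
qed (use assms in auto)

text \<open>Chains start at the colour \<open>(N + 1) div 2\<close> of position \<open>0\<close>.\<close>

definition middle_vector :: "int \<Rightarrow> int \<Rightarrow> int" where
  "middle_vector N = (\<lambda>y. if y = (N + 1) div 2 then 1 else 0)"

lemma transfer_total_vanish:
  assumes w: "w \<noteq> []" and big: "2 * word_peaks w + of_bool (\<not> hd w) > t"
  shows "transfer_total (2 * int t + 1) (middle_vector (2 * int t + 1)) w = 0"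
proof -
  let ?N = "2 * int t + 1"
  have "transfer_word ?N (middle_vector ?N) w z = 0" for z
  proof (rule ccontr)
    assume nz: "transfer_word ?N (middle_vector ?N) w z \<noteq> 0"
    have "\<And>y. middle_vector ?N y \<noteq> 0 \<Longrightarrow> y = int t + 1"
      by (simp add: middle_vector_def split: if_splits)
    from transfer_word_support[OF this nz]
    have "z - (int t + 1) \<ge> int (word_changes (odd (int t + 1) # w))"
      by (simp add: of_bool_def split: if_splits)
    moreover have "word_changes (odd (int t + 1) # w)
        = of_bool (odd (int t + 1) \<noteq> hd w) + word_changes w"
      using w by (cases w) auto
    moreover have "z \<le> ?N" using transfer_word_outside[OF w, of z ?N] nz by auto
    moreover note word_peaks_le_changes[OF w] big
    ultimately show False by (cases "hd w"; simp add: of_bool_def split: if_splits; presburger)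
  qed
  then show ?thesis by (simp add: transfer_total_def)
qed

lemma transfer_word_replicate_pos:
  assumes "\<And>y. l y \<ge> 0" "x \<in> {1..N}" "l x > 0" "odd x \<longleftrightarrow> s"
  shows "transfer_word N l (replicate k s) x > 0"
proof (induction k)
  case (Suc k)
  have "transfer_word N l (replicate (Suc k) s) x = transfer N s (transfer_word N l (replicate k s)) x"
    by (simp add: transfer_word_snoc flip: replicate_append_same)
  also have "\<dots> > 0"
    by (rule transfer_pos[where y=x])
        (use assms Suc transfer_word_nonneg in \<open>auto simp: chain_step_def\<close>)
  finally show ?case .
qed (use assms in simp)

lemma transfer_word_zigzag_pos:
  assumes "\<And>y. l y \<ge> 0" "x \<ge> 1" "x + 2 * int p \<le> N" "l x > 0"
  shows "transfer_word N l (zigzag p) (x + 2 * int p) > 0"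
  using assms
proof (induction p arbitrary: l x)
  case (Suc p)
  have nonneg: "\<And>y. transfer N True l y \<ge> 0" "\<And>y. transfer N False (transfer N True l) y \<ge> 0"
    using Suc.prems by (simp_all add: transfer_nonneg)
  have step1: "transfer N True l (x + 1) > 0"
    by (rule transfer_pos[where y=x]) (use Suc.prems in \<open>auto simp: chain_step_def\<close>)
  have "transfer N False (transfer N True l) (x + 2) > 0"
    by (rule transfer_pos[where y="x + 1"]) (use Suc.prems nonneg step1 in \<open>auto simp: chain_step_def\<close>)
  then have "transfer_word N (transfer N False (transfer N True l)) (zigzag p)
      ((x + 2) + 2 * int p) > 0"
    by (intro Suc.IH) (use Suc.prems nonneg in auto)
  then show ?case by (simp add: zigzag_Suc transfer_word_Cons algebra_simps)
qed simp

lemma transfer_total_pos: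
  assumes "\<And>y. l y \<ge> 0" "z \<in> {1..N}" "transfer_word N l w z > 0"
  shows "transfer_total N l w > 0"
proof -
  have "0 < transfer_word N l w z" by fact
  also have "\<dots> \<le> transfer_total N l w" unfolding transfer_total_def
    by (rule member_le_sum) (use assms transfer_word_nonneg in auto)
  finally show ?thesis .
qed

definition class_word :: "nat \<Rightarrow> nat \<Rightarrow> bool list" where
  "class_word n t = replicate (n - 2 * (t div 2)) (even t) @ zigzag (t div 2)"

lemma transfer_total_class_word_pos:
  "transfer_total (2 * int t + 1) (middle_vector (2 * int t + 1)) (class_word n t) > 0"
proof -
  let ?N = "2 * int t + 1" and ?k = "n - 2 * (t div 2)" and ?z = "int t + 1 + 2 * int (t div 2)"
  have nonneg: "\<And>y. middle_vector ?N y \<ge> 0" by (simp add: middle_vector_def)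
  have "transfer_word ?N (middle_vector ?N) (replicate ?k (even t)) (int t + 1) > 0"
    by (rule transfer_word_replicate_pos) (use nonneg in \<open>auto simp: middle_vector_def\<close>)
  then have "transfer_word ?N (transfer_word ?N (middle_vector ?N) (replicate ?k (even t)))
      (zigzag (t div 2)) ?z > 0"
    by (intro transfer_word_zigzag_pos) (use transfer_word_nonneg nonneg in auto)
  then show ?thesis
    by (intro transfer_total_pos[where z = ?z])
        (use nonneg in \<open>auto simp: class_word_def transfer_word_append\<close>)
qed

lemma word_peaks_zigzag: "word_peaks (zigzag p) = p"
proof (induction p)
  case (Suc p)
  then show ?case by (cases p) (simp_all add: zigzag_Suc)
qed simp

lemma word_peaks_replicate_zigzag: "word_peaks (replicate k f @ zigzag p) = p"
proof (induction k)
  case (Suc k)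
  show ?case
  proof (cases "replicate k f @ zigzag p = []")
    case False
    have "hd (replicate k f @ zigzag p) = f \<or> hd (replicate k f @ zigzag p)"
      using False by (cases k; cases p) (simp_all add: zigzag_Suc)
    then show ?thesis using Suc False by (auto simp: word_peaks_Cons)
  qed (simp add: zigzag_def)
qed (simp add: word_peaks_zigzag)

lemma class_word_props:
  assumes "t \<le> n" "n \<ge> 1"
  shows "class_word n t \<noteq> []" "length (class_word n t) = n" "hd (class_word n t) = even t"
    "word_peaks (class_word n t) = t div 2"
proof -
  show "length (class_word n t) = n"
    using assms by (auto simp: class_word_def zigzag_def length_concat sum_list_replicate)
  then show "class_word n t \<noteq> []" using assms by auto
  show "word_peaks (class_word n t) = t div 2"
    by (simp add: class_word_def word_peaks_replicate_zigzag)
  show "hd (class_word n t) = even t"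
  proof (cases "n - 2 * (t div 2)")
    case 0
    with assms have "even t" "t div 2 \<ge> 1" by presburger+
    then show ?thesis using 0 by (cases "t div 2") (simp_all add: class_word_def zigzag_Suc)
  qed (simp add: class_word_def)
qed

section \<open>Signed permutations\<close>

abbreviation sym_interval :: "nat \<Rightarrow> int set" where "sym_interval n \<equiv> {- int n..int n}"

lemma signed_perms_odd: "\<sigma> \<in> signed_perms n \<Longrightarrow> \<sigma> (- i) = - \<sigma> i"
  by (simp add: signed_perms_def)

lemma signed_perms_zero: "\<sigma> \<in> signed_perms n \<Longrightarrow> \<sigma> 0 = 0"
  using signed_perms_odd[of \<sigma> n 0] by simp

lemma signed_perms_bij: "\<sigma> \<in> signed_perms n \<Longrightarrow> bij_betw \<sigma> (sym_interval n) (sym_interval n)"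
  by (simp add: signed_perms_def)

lemma signed_perms_outside: "\<sigma> \<in> signed_perms n \<Longrightarrow> i \<notin> sym_interval n \<Longrightarrow> \<sigma> i = i"
  by (auto simp: signed_perms_def)

lemma signed_perms_in: "\<sigma> \<in> signed_perms n \<Longrightarrow> i \<in> sym_interval n \<Longrightarrow> \<sigma> i \<in> sym_interval n"
  using signed_perms_bij bij_betwE by blast

lemma signed_perms_inj: "\<sigma> \<in> signed_perms n \<Longrightarrow> inj_on \<sigma> (sym_interval n)"
  using signed_perms_bij bij_betw_imp_inj_on by blast

lemma signed_perms_surj: "\<sigma> \<in> signed_perms n \<Longrightarrow> j \<in> sym_interval n \<Longrightarrow> \<exists>i\<in>sym_interval n. \<sigma> i = j"
  using signed_perms_bij by (metis bij_betw_iff_bijections)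

lemma signed_perms_nonzero: "\<sigma> \<in> signed_perms n \<Longrightarrow> i \<in> sym_interval n \<Longrightarrow> i \<noteq> 0 \<Longrightarrow> \<sigma> i \<noteq> 0"
  using inj_onD[OF signed_perms_inj[of \<sigma> n], of i 0] signed_perms_zero[of \<sigma> n] by auto

lemma signed_perms_comp: "\<sigma> \<in> signed_perms n \<Longrightarrow> \<tau> \<in> signed_perms n \<Longrightarrow> \<sigma> \<circ> \<tau> \<in> signed_perms n"
  unfolding signed_perms_def by (auto intro: bij_betw_trans)

lemma finite_signed_perms: "finite (signed_perms n)"
proof -
  have "inj_on (\<lambda>\<sigma>. restrict \<sigma> (sym_interval n)) (signed_perms n)"
  proof (rule inj_onI)
    fix \<sigma> \<tau> assume a: "\<sigma> \<in> signed_perms n" "\<tau> \<in> signed_perms n"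
          "restrict \<sigma> (sym_interval n) = restrict \<tau> (sym_interval n)"
    show "\<sigma> = \<tau>"
    proof
      fix i show "\<sigma> i = \<tau> i"
      proof (cases "i \<in> sym_interval n")
        case True then show ?thesis using fun_cong[OF a(3), of i] by simp
      next
        case False then show ?thesis
          using signed_perms_outside[OF a(1) False] signed_perms_outside[OF a(2) False] by simp
      qed
    qed
  qed
  moreover have "(\<lambda>\<sigma>. restrict \<sigma> (sym_interval n)) ` signed_perms n
      \<subseteq> PiE (sym_interval n) (\<lambda>_. sym_interval n)"
    using signed_perms_in by fastforce
  moreover have "finite (PiE (sym_interval n) (\<lambda>_. sym_interval n))" by (rule finite_PiE) auto
  ultimately show ?thesis by (metis finite_imageD finite_subset)
qed

section \<open>Colourings and their sorting permutations\<close>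

definition colourings :: "int \<Rightarrow> nat \<Rightarrow> (int \<Rightarrow> int) set" where
  "colourings N n = PiE {1..int n} (\<lambda>_. {1..N})"

definition colour :: "int \<Rightarrow> (int \<Rightarrow> int) \<Rightarrow> int \<Rightarrow> int" where
  "colour N u i = (if 0 < i then u i else if i < 0 then N + 1 - u (- i) else (N + 1) div 2)"

definition tie_less :: "int \<Rightarrow> int \<Rightarrow> int \<Rightarrow> int \<Rightarrow> bool" where
  "tie_less x i y j \<longleftrightarrow> x < y \<or> (x = y \<and> (if odd x then i < j else j < i))"

definition colour_less :: "int \<Rightarrow> (int \<Rightarrow> int) \<Rightarrow> int \<Rightarrow> int \<Rightarrow> bool" where
  "colour_less N u i j \<longleftrightarrow> tie_less (colour N u i) i (colour N u j) j"

lemma tie_less_irrefl: "\<not> tie_less x i x i"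
  by (simp add: tie_less_def)

lemma tie_less_trans: "tie_less x i y j \<Longrightarrow> tie_less y j z k \<Longrightarrow> tie_less x i z k"
  by (auto simp: tie_less_def split: if_splits)

lemma tie_less_asym: "tie_less x i y j \<Longrightarrow> \<not> tie_less y j x i"
  by (auto simp: tie_less_def split: if_splits)

lemma tie_less_total: "i \<noteq> j \<Longrightarrow> tie_less x i y j \<or> tie_less y j x i"
  by (auto simp: tie_less_def)

lemma colour_less_irrefl: "\<not> colour_less N u i i"
  by (simp add: colour_less_def tie_less_irrefl)

lemma colour_less_trans: "colour_less N u i j \<Longrightarrow> colour_less N u j k \<Longrightarrow> colour_less N u i k"
  unfolding colour_less_def by (rule tie_less_trans)

lemma colour_less_asym: "colour_less N u i j \<Longrightarrow> \<not> colour_less N u j i"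
  unfolding colour_less_def by (rule tie_less_asym)

lemma colour_less_total: "i \<noteq> j \<Longrightarrow> colour_less N u i j \<or> colour_less N u j i"
  unfolding colour_less_def by (rule tie_less_total)

lemma colour_neg: "odd N \<Longrightarrow> colour N u (- i) = N + 1 - colour N u i"
proof -
  assume "odd N"
  then obtain k where k: "N = 2 * k + 1" by (auto elim: oddE)
  show ?thesis unfolding colour_def k by auto
qed

lemma colour_less_neg: "odd N \<Longrightarrow> colour_less N u (- j) (- i) \<longleftrightarrow> colour_less N u i j"
proof -
  assume N: "odd N"
  have "odd (N + 1 - colour N u i) \<longleftrightarrow> odd (colour N u i)" using N by simp
  then show ?thesis unfolding colour_less_def tie_less_def colour_neg[OF N] by auto
qed

lemma colour_range: "u \<in> colourings N n \<Longrightarrow> N \<ge> 1 \<Longrightarrow> i \<in> sym_interval n \<Longrightarrow> colour N u i \<in> {1..N}"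
  unfolding colourings_def colour_def by (auto simp: PiE_iff)

definition colour_rank :: "nat \<Rightarrow> int \<Rightarrow> (int \<Rightarrow> int) \<Rightarrow> int \<Rightarrow> int" where
  "colour_rank n N u i = int (card {j \<in> sym_interval n. colour_less N u j i}) - int n"

lemma colour_rank_mono:
  assumes "i \<in> sym_interval n" "colour_less N u i j"
  shows "colour_rank n N u i < colour_rank n N u j"
proof -
  have "{k \<in> sym_interval n. colour_less N u k i} \<subset> {k \<in> sym_interval n. colour_less N u k j}"
    using assms colour_less_trans colour_less_irrefl by blast
  then have "card {k \<in> sym_interval n. colour_less N u k i}
      < card {k \<in> sym_interval n. colour_less N u k j}"
    by (rule psubset_card_mono[rotated]) (rule finite_subset[of _ "sym_interval n"], auto)
  then show ?thesis by (simp add: colour_rank_def)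
qed

lemma colour_rank_inj: "inj_on (colour_rank n N u) (sym_interval n)"
proof (rule inj_onI)
  fix i j assume "i \<in> sym_interval n" "j \<in> sym_interval n" "colour_rank n N u i = colour_rank n N u j"
  then show "i = j"
    using colour_less_total[of i j N u]
      colour_rank_mono[of i n N u j] colour_rank_mono[of j n N u i] by force
qed

lemma card_colour_less_split:
  assumes "i \<in> sym_interval n"
  shows "card {k \<in> sym_interval n. colour_less N u k i}
      + card {k \<in> sym_interval n. colour_less N u i k} = 2 * n"
proof -
  have "card {k \<in> sym_interval n. colour_less N u k i} + card {k \<in> sym_interval n. colour_less N u i k}
      = card ({k \<in> sym_interval n. colour_less N u k i} \<union> {k \<in> sym_interval n. colour_less N u i k})"
    by (rule card_Un_disjoint[symmetric])
        (auto dest: colour_less_asym intro: finite_subset[of _ "sym_interval n"])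
  also have "{k \<in> sym_interval n. colour_less N u k i} \<union> {k \<in> sym_interval n. colour_less N u i k}
      = sym_interval n - {i}"
    using colour_less_total colour_less_irrefl by blast
  also have "card (sym_interval n - {i}) = 2 * n" using assms by simp
  finally show ?thesis .
qed

lemma colour_rank_range: "i \<in> sym_interval n \<Longrightarrow> colour_rank n N u i \<in> sym_interval n"
  using card_colour_less_split[of i n N u] by (auto simp: colour_rank_def)

lemma colour_rank_bij: "bij_betw (colour_rank n N u) (sym_interval n) (sym_interval n)"
proof -
  have "colour_rank n N u ` sym_interval n \<subseteq> sym_interval n" using colour_rank_range by blast
  then have "colour_rank n N u ` sym_interval n = sym_interval n"
    using endo_inj_surj colour_rank_inj by blast
  then show ?thesis using colour_rank_inj unfolding bij_betw_def by blast
qed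

lemma colour_rank_neg:
  assumes N: "odd N" and i: "i \<in> sym_interval n"
  shows "colour_rank n N u (- i) = - colour_rank n N u i"
proof -
  have "card {j \<in> sym_interval n. colour_less N u j (- i)}
      = card {k \<in> sym_interval n. colour_less N u i k}"
  proof (rule bij_betw_same_card[of uminus], rule bij_betw_Collect)
    show "bij_betw uminus (sym_interval n) (sym_interval n)"
      by (rule bij_betw_byWitness[where f' = uminus]) auto
    show "colour_less N u i (- j) \<longleftrightarrow> colour_less N u j (- i)" for j
      using colour_less_neg[OF N, of u "- j" i] by simp
  qed
  then show ?thesis using card_colour_less_split[OF i, of N u] by (simp add: colour_rank_def)
qed

definition sorting_perm :: "nat \<Rightarrow> int \<Rightarrow> (int \<Rightarrow> int) \<Rightarrow> int \<Rightarrow> int" where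
  "sorting_perm n N u = (\<lambda>i. if i \<in> sym_interval n then
      the_inv_into (sym_interval n) (colour_rank n N u) i else i)"

lemma colour_rank_image: "i \<in> sym_interval n \<Longrightarrow> i \<in> colour_rank n N u ` sym_interval n"
  using colour_rank_bij[of n N u] by (simp add: bij_betw_def)

lemma sorting_perm_in: "i \<in> sym_interval n \<Longrightarrow> sorting_perm n N u i \<in> sym_interval n"
  using the_inv_into_into[OF colour_rank_inj colour_rank_image order_refl]
    unfolding sorting_perm_def by simp

lemma colour_rank_sorting_perm: "i \<in> sym_interval n \<Longrightarrow> colour_rank n N u (sorting_perm n N u i) = i"
  using f_the_inv_into_f[OF colour_rank_inj colour_rank_image] unfolding sorting_perm_def by simp

lemma sorting_perm_colour_rank: "j \<in> sym_interval n \<Longrightarrow> sorting_perm n N u (colour_rank n N u j) = j"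
  unfolding sorting_perm_def using colour_rank_bij colour_rank_range colour_rank_inj
  by (simp add: the_inv_into_f_f)

lemma sorting_perm_bij: "bij_betw (sorting_perm n N u) (sym_interval n) (sym_interval n)"
proof -
  have "bij_betw (the_inv_into (sym_interval n) (colour_rank n N u)) (sym_interval n) (sym_interval n)"
    using colour_rank_bij bij_betw_the_inv_into by blast
  then show ?thesis by (rule bij_betw_cong[THEN iffD1, rotated]) (simp add: sorting_perm_def)
qed

lemma sorting_perm_signed_perm:
  assumes N: "odd N"
  shows "sorting_perm n N u \<in> signed_perms n"
proof -
  have odd: "sorting_perm n N u (- i) = - sorting_perm n N u i" for i
  proof (cases "i \<in> sym_interval n")
    case True
    have "colour_rank n N u (- sorting_perm n N u i) = - i"
      using colour_rank_neg[OF N sorting_perm_in[OF True]] colour_rank_sorting_perm[OF True] by simp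
    then have "sorting_perm n N u (colour_rank n N u (- sorting_perm n N u i))
        = sorting_perm n N u (- i)"
      by simp
    moreover have "- sorting_perm n N u i \<in> sym_interval n" using sorting_perm_in[OF True, of N u]
      by auto
    ultimately show ?thesis using sorting_perm_colour_rank by metis
  next
    case False
    then have "- i \<notin> sym_interval n" by auto
    then have "sorting_perm n N u (- i) = - i" by (simp only: sorting_perm_def if_False)
    moreover have "sorting_perm n N u i = i" using False by (simp only: sorting_perm_def if_False)
    ultimately show ?thesis by simp
  qed
  moreover have "\<forall>i. \<bar>i\<bar> > int n \<longrightarrow> sorting_perm n N u i = i" by (auto simp: sorting_perm_def)
  ultimately show ?thesis using sorting_perm_bij by (auto simp: signed_perms_def)
qed

definition sorts :: "nat \<Rightarrow> int \<Rightarrow> (int \<Rightarrow> int) \<Rightarrow> (int \<Rightarrow> int) \<Rightarrow> bool" where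
  "sorts n N u \<sigma> \<longleftrightarrow> (\<forall>a\<in>sym_interval n. \<forall>b\<in>sym_interval n. a < b \<longrightarrow> colour_less N u (\<sigma> a) (\<sigma> b))"

lemma sorts_sorting_perm: "sorts n N u (sorting_perm n N u)"
  unfolding sorts_def
proof (intro ballI impI)
  fix a b assume ab: "a \<in> sym_interval n" "b \<in> sym_interval n" "a < b"
  have ne: "sorting_perm n N u a \<noteq> sorting_perm n N u b" using ab colour_rank_sorting_perm
    by (metis less_irrefl)
  show "colour_less N u (sorting_perm n N u a) (sorting_perm n N u b)"
  proof (rule ccontr)
    assume "\<not> colour_less N u (sorting_perm n N u a) (sorting_perm n N u b)"
    then have "colour_less N u (sorting_perm n N u b) (sorting_perm n N u a)"
      using colour_less_total ne by blast
    then have "colour_rank n N u (sorting_perm n N u b) < colour_rank n N u (sorting_perm n N u a)"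
      using colour_rank_mono sorting_perm_in ab by blast
    then show False using ab colour_rank_sorting_perm by simp
  qed
qed

lemma colour_rank_sorted:
  assumes s: "\<sigma> \<in> signed_perms n" and so: "sorts n N u \<sigma>" and a: "a \<in> sym_interval n"
  shows "colour_rank n N u (\<sigma> a) = a"
proof -
  have "{j \<in> sym_interval n. colour_less N u j (\<sigma> a)} = \<sigma> ` {b \<in> sym_interval n. b < a}"
  proof
    show "\<sigma> ` {b \<in> sym_interval n. b < a} \<subseteq> {j \<in> sym_interval n. colour_less N u j (\<sigma> a)}"
      using so a signed_perms_in[OF s] unfolding sorts_def by auto
  next
    show "{j \<in> sym_interval n. colour_less N u j (\<sigma> a)} \<subseteq> \<sigma> ` {b \<in> sym_interval n. b < a}"
    proof
      fix j assume j: "j \<in> {j \<in> sym_interval n. colour_less N u j (\<sigma> a)}"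
      then obtain b where b: "b \<in> sym_interval n" "\<sigma> b = j" using signed_perms_surj[OF s] by blast
      have "b < a"
      proof (rule ccontr)
        assume "\<not> b < a"
        then have "b = a \<or> a < b" by auto
        then show False using j b so a colour_less_irrefl colour_less_asym unfolding sorts_def
          by blast
      qed
      then show "j \<in> \<sigma> ` {b \<in> sym_interval n. b < a}" using b by auto
    qed
  qed
  moreover have "inj_on \<sigma> {b \<in> sym_interval n. b < a}" using signed_perms_inj[OF s]
    by (rule inj_on_subset) auto
  ultimately have "card {j \<in> sym_interval n. colour_less N u j (\<sigma> a)}
      = card {b \<in> sym_interval n. b < a}"
    by (simp add: card_image)
  also have "{b \<in> sym_interval n. b < a} = {- int n..a - 1}" using a by auto
  also have "card \<dots> = nat (a + int n)" by simp
  finally show ?thesis using a by (simp add: colour_rank_def)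
qed

lemma sorts_unique:
  assumes s: "\<sigma> \<in> signed_perms n" and so: "sorts n N u \<sigma>"
  shows "\<sigma> = sorting_perm n N u"
proof
  fix a show "\<sigma> a = sorting_perm n N u a"
  proof (cases "a \<in> sym_interval n")
    case True
    then show ?thesis
      using colour_rank_sorted[OF s so True]
        sorting_perm_colour_rank[OF signed_perms_in[OF s True]] by metis
  next
    case False then show ?thesis using signed_perms_outside[OF s, of a]
      by (auto simp: sorting_perm_def)
  qed
qed

lemma sorts_iff_sorting_perm:
  assumes "\<sigma> \<in> signed_perms n"
  shows "sorts n N u \<sigma> \<longleftrightarrow> sorting_perm n N u = \<sigma>"
  using sorts_unique[OF assms] sorts_sorting_perm by metis

lemma finite_colourings: "finite (colourings N n)"
  unfolding colourings_def by (rule finite_PiE) auto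

lemma card_colourings: "N \<ge> 0 \<Longrightarrow> card (colourings N n) = nat N ^ n"
  unfolding colourings_def by (simp add: card_PiE)

section \<open>Multiplicativity\<close>

text \<open>A colour in \<open>{1..N * M}\<close> is a block \<open>y \<in> {1..M}\<close> together with a colour \<open>x \<in> {1..N}\<close>
  inside it; odd blocks are traversed upwards and even blocks downwards.\<close>

definition snake :: "int \<Rightarrow> int \<Rightarrow> int \<Rightarrow> int" where
  "snake N y x = (y - 1) * N + (if odd y then x else N + 1 - x)"

definition colouring_prod :: "nat \<Rightarrow> int \<Rightarrow> int \<Rightarrow> (int \<Rightarrow> int) \<Rightarrow> (int \<Rightarrow> int) \<Rightarrow> int \<Rightarrow> int" where
  "colouring_prod n N M u v = (\<lambda>i. if i \<in> {1..int n} then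
      snake N (colour M v (colour_rank n N u i)) (u i) else undefined)"

lemma snake_lower: "x \<in> {1..N} \<Longrightarrow> (y - 1) * N + 1 \<le> snake N y x"
  unfolding snake_def by auto

lemma snake_upper: "x \<in> {1..N} \<Longrightarrow> snake N y x \<le> y * N"
  unfolding snake_def by (auto simp: algebra_simps)

lemma snake_less:
  assumes "x \<in> {1..N}" "x' \<in> {1..N}" "y < y'"
  shows "snake N y x < snake N y' x'"
proof -
  have "y * N \<le> (y' - 1) * N" using assms by (intro mult_right_mono) auto
  then show ?thesis using snake_upper[OF assms(1), of y] snake_lower[OF assms(2), of y'] by linarith
qed

lemma snake_inj:
  assumes "x \<in> {1..N}" "x' \<in> {1..N}" "snake N y x = snake N y' x'"
  shows "y = y' \<and> x = x'"
proof -
  have "y = y'" using snake_less[OF assms(1,2)] snake_less[OF assms(2,1)] assms(3)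
    by (metis less_irrefl linorder_neqE)
  then show ?thesis using assms(3) unfolding snake_def by (auto split: if_splits)
qed

lemma odd_snake: "odd N \<Longrightarrow> odd (snake N y x) \<longleftrightarrow> (odd y \<longleftrightarrow> odd x)"
  unfolding snake_def by (cases "odd y") auto

lemma colour_rank_zero: "odd N \<Longrightarrow> colour_rank n N u 0 = 0"
  using colour_rank_neg[of N 0 n u] by simp

lemma colour_colouring_prod:
  assumes N: "odd N" and M: "odd M" and i: "i \<in> sym_interval n"
  shows "colour (N * M) (colouring_prod n N M u v) i
      = snake N (colour M v (colour_rank n N u i)) (colour N u i)"
proof -
  consider "0 < i" | "i < 0" | "i = 0" by linarith
  then show ?thesis
  proof cases
    case 1 then show ?thesis using i by (simp add: colour_def colouring_prod_def)
  next
    case 2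
    have mi: "- i \<in> {1..int n}" using 2 i by auto
    have r: "colour_rank n N u (- i) = - colour_rank n N u i" using colour_rank_neg[OF N i] .
    define y where "y = colour M v (colour_rank n N u i)"
    have ey: "colour M v (colour_rank n N u (- i)) = M + 1 - y" unfolding r y_def
      by (rule colour_neg[OF M])
    have pe: "odd (M + 1 - y) \<longleftrightarrow> odd y" using M by simp
    have "colour (N * M) (colouring_prod n N M u v) i = N * M + 1 - snake N (M + 1 - y) (u (- i))"
      using 2 mi ey by (simp add: colour_def colouring_prod_def)
    also have "\<dots> = snake N y (N + 1 - u (- i))"
      unfolding snake_def using pe by (cases "odd y") (auto simp: algebra_simps)
    also have "N + 1 - u (- i) = colour N u i" using 2 by (simp add: colour_def)
    finally show ?thesis by (simp add: y_def)
  next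
    case 3
    obtain a where a: "N = 2 * a + 1" using N by (auto elim: oddE)
    obtain b where b: "M = 2 * b + 1" using M by (auto elim: oddE)
    have "colour (N * M) (colouring_prod n N M u v) i = (N * M + 1) div 2"
      using 3 by (simp add: colour_def)
    also have "N * M + 1 = 2 * (2 * a * b + a + b + 1)" unfolding a b by (simp add: algebra_simps)
    also have "2 * (2 * a * b + a + b + 1) div 2 = b * (2 * a + 1) + (a + 1)"
      by (simp add: algebra_simps)
    also have "\<dots> = snake N (b + 1) (a + 1)" unfolding snake_def a by (auto simp: algebra_simps)
    also have "b + 1 = colour M v (colour_rank n N u i)"
      using 3 colour_rank_zero[OF N] by (simp add: colour_def b)
    also have "a + 1 = colour N u i" using 3 by (simp add: colour_def a)
    finally show ?thesis .
  qed
qed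

lemma tie_less_snake:
  assumes N: "odd N" and x: "x \<in> {1..N}" "x' \<in> {1..N}"
  shows "tie_less (snake N y x) i (snake N y' x') j \<longleftrightarrow>
    y < y' \<or> (y = y' \<and> (if odd y then tie_less x i x' j else tie_less x' j x i))"
proof (cases "y = y'")
  case True
  then show ?thesis
    using odd_snake[OF N, of y x] by (cases "odd y") (auto simp: tie_less_def snake_def)
next
  case False
  then consider "y < y'" | "y' < y" by linarith
  then show ?thesis
  proof cases
    case 1
    then show ?thesis using snake_less[OF x 1] by (auto simp: tie_less_def)
  next
    case 2
    then show ?thesis using snake_less[OF x(2,1) 2] by (auto simp: tie_less_def)
  qed
qed

lemma colour_less_colouring_prod:
  fixes v :: "int \<Rightarrow> int"
  assumes N: "odd N" "N \<ge> 1" and M: "odd M" and u: "u \<in> colourings N n"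
    and i: "i \<in> sym_interval n" and j: "j \<in> sym_interval n"
  defines "c \<equiv> \<lambda>i. colour M v (colour_rank n N u i)"
  shows "colour_less (N * M) (colouring_prod n N M u v) i j \<longleftrightarrow>
    c i < c j \<or> (c i = c j \<and> (if odd (c i) then colour_less N u i j else colour_less N u j i))"
  unfolding colour_less_def colour_colouring_prod[OF N(1) M i] colour_colouring_prod[OF N(1) M j] c_def
  using tie_less_snake[OF N(1) colour_range[OF u N(2) i] colour_range[OF u N(2) j]] .

lemma sorts_colouring_prod:
  assumes N: "odd N" "N \<ge> 1" and M: "odd M" and u: "u \<in> colourings N n"
  shows "sorts n (N * M) (colouring_prod n N M u v) (sorting_perm n N u \<circ> sorting_perm n M v)"
  unfolding sorts_def
proof (intro ballI impI)
  fix a b assume ab: "a \<in> sym_interval n" "b \<in> sym_interval n" "a < b"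
  let ?\<pi> = "sorting_perm n N u" and ?\<alpha> = "sorting_perm n M v a" and ?\<beta> = "sorting_perm n M v b"
  have in_range: "?\<alpha> \<in> sym_interval n" "?\<beta> \<in> sym_interval n" using sorting_perm_in ab by auto
  then have \<pi>_range: "?\<pi> ?\<alpha> \<in> sym_interval n" "?\<pi> ?\<beta> \<in> sym_interval n" using sorting_perm_in by auto
  have v_sorted: "colour_less M v ?\<alpha> ?\<beta>"
    using sorts_sorting_perm[of n M v] ab unfolding sorts_def by blast
  have u_sorted: "colour_less N u (?\<pi> p) (?\<pi> q)"
      if "p \<in> sym_interval n" "q \<in> sym_interval n" "p < q" for p q
    using sorts_sorting_perm[of n N u] that unfolding sorts_def by blast
  have "colour_less (N * M) (colouring_prod n N M u v) (?\<pi> ?\<alpha>) (?\<pi> ?\<beta>) \<longleftrightarrow>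
      colour M v ?\<alpha> < colour M v ?\<beta> \<or>
      (colour M v ?\<alpha> = colour M v ?\<beta> \<and>
        (if odd (colour M v ?\<alpha>) then colour_less N u (?\<pi> ?\<alpha>) (?\<pi> ?\<beta>)
         else colour_less N u (?\<pi> ?\<beta>) (?\<pi> ?\<alpha>)))"
    using colour_less_colouring_prod[OF N M u \<pi>_range, of v]
    unfolding colour_rank_sorting_perm[OF in_range(1)] colour_rank_sorting_perm[OF in_range(2)] .
  then show "colour_less (N * M) (colouring_prod n N M u v)
      ((?\<pi> \<circ> sorting_perm n M v) a) ((?\<pi> \<circ> sorting_perm n M v) b)"
    using v_sorted u_sorted[OF in_range] u_sorted[OF in_range(2,1)]
    unfolding colour_less_def[of M v] tie_less_def by auto
qed

lemma sorting_perm_colouring_prod: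
  assumes N: "odd N" "N \<ge> 1" and M: "odd M" and u: "u \<in> colourings N n"
  shows "sorting_perm n (N * M) (colouring_prod n N M u v) = sorting_perm n N u \<circ> sorting_perm n M v"
proof -
  have "sorting_perm n N u \<circ> sorting_perm n M v \<in> signed_perms n"
    using sorting_perm_signed_perm N M signed_perms_comp by blast
  then show ?thesis using sorts_unique sorts_colouring_prod[OF N M u] by metis
qed

lemma colouring_prod_in:
  assumes N: "N \<ge> 1" and M: "M \<ge> 1" and u: "u \<in> colourings N n" and v: "v \<in> colourings M n"
  shows "colouring_prod n N M u v \<in> colourings (N * M) n"
proof -
  have "colouring_prod n N M u v i \<in> {1..N * M}" if i: "i \<in> {1..int n}" for i
  proof -
    have x: "u i \<in> {1..N}" using u i by (auto simp: colourings_def)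
    define y where "y = colour M v (colour_rank n N u i)"
    have "colour_rank n N u i \<in> sym_interval n" using colour_rank_range i by auto
    then have y: "y \<in> {1..M}" unfolding y_def by (rule colour_range[OF v M])
    have "y * N \<le> M * N" using y N by (intro mult_right_mono) auto
    moreover have "0 \<le> (y - 1) * N" using y N by auto
    moreover have "(y - 1) * N + 1 \<le> snake N y (u i)" by (rule snake_lower[OF x])
    moreover have "snake N y (u i) \<le> y * N" by (rule snake_upper[OF x])
    ultimately have "snake N y (u i) \<in> {1..N * M}" by (auto simp: mult.commute)
    then show ?thesis using i by (simp add: colouring_prod_def y_def)
  qed
  then show ?thesis by (auto simp: colourings_def colouring_prod_def)
qed

lemma colourings_eqI:
  assumes "u \<in> colourings N n" "u' \<in> colourings N n" "\<And>i. i \<in> {1..int n} \<Longrightarrow> u i = u' i"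
  shows "u = u'"
  using assms unfolding colourings_def by (rule PiE_ext) auto

lemma colouring_prod_inj:
  assumes N: "odd N" "N \<ge> 1" and M: "odd M"
  shows "inj_on (\<lambda>(u, v). colouring_prod n N M u v) (colourings N n \<times> colourings M n)"
proof (rule inj_onI, clarify)
  fix u v u' v'
  assume u: "u \<in> colourings N n" and v: "v \<in> colourings M n"
    and u': "u' \<in> colourings N n" and v': "v' \<in> colourings M n"
    and eq: "colouring_prod n N M u v = colouring_prod n N M u' v'"
  have colours_eq: "colour N u i = colour N u' i \<and>
      colour M v (colour_rank n N u i) = colour M v' (colour_rank n N u' i)"
    if i: "i \<in> sym_interval n" for i
  proof -
    have "snake N (colour M v (colour_rank n N u i)) (colour N u i)
        = snake N (colour M v' (colour_rank n N u' i)) (colour N u' i)"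
      using colour_colouring_prod[OF N(1) M i, where u = u and v = v]
        colour_colouring_prod[OF N(1) M i, where u = u' and v = v'] eq
      by simp
    then show ?thesis using snake_inj[OF colour_range[OF u N(2) i] colour_range[OF u' N(2) i]]
      by blast
  qed
  have "u = u'"
  proof (rule colourings_eqI[OF u u'])
    fix i assume "i \<in> {1..int n}"
    then show "u i = u' i" using colours_eq[of i] by (simp add: colour_def)
  qed
  moreover have "v = v'"
  proof (rule colourings_eqI[OF v v'])
    fix k assume k: "k \<in> {1..int n}"
    then obtain i where "i \<in> sym_interval n" "colour_rank n N u i = k"
      using colour_rank_image[of k n N u] by auto
    then have "colour M v k = colour M v' k" using colours_eq \<open>u = u'\<close> by auto
    then show "v k = v' k" using k by (simp add: colour_def)
  qed
  ultimately show "u = u' \<and> v = v'" ..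
qed

lemma colouring_prod_image:
  assumes N: "odd N" "N \<ge> 1" and M: "odd M" "M \<ge> 1"
  shows "(\<lambda>(u, v). colouring_prod n N M u v) ` (colourings N n \<times> colourings M n) = colourings (N * M) n"
proof (rule card_seteq)
  show "finite (colourings (N * M) n)" by (rule finite_colourings)
  show "(\<lambda>(u, v). colouring_prod n N M u v) ` (colourings N n \<times> colourings M n) \<subseteq> colourings (N * M) n"
    using colouring_prod_in N M by auto
  have "card ((\<lambda>(u, v). colouring_prod n N M u v) ` (colourings N n \<times> colourings M n))
      = card (colourings N n \<times> colourings M n)"
    by (rule card_image[OF colouring_prod_inj[OF N M(1)]])
  also have "\<dots> = nat N ^ n * nat M ^ n" using N M
    by (simp add: card_cartesian_product card_colourings)
  also have "\<dots> = nat (N * M) ^ n" using N M by (simp add: nat_mult_distrib power_mult_distrib)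
  also have "\<dots> = card (colourings (N * M) n)" using N M by (simp add: card_colourings)
  finally show "card (colourings (N * M) n)
      \<le> card ((\<lambda>(u, v). colouring_prod n N M u v) ` (colourings N n \<times> colourings M n))"
    by simp
qed

definition rho :: "nat \<Rightarrow> int \<Rightarrow> (int \<Rightarrow> int) \<Rightarrow> rat" where
  "rho n N = (\<lambda>\<sigma>. of_nat (card {u \<in> colourings N n. sorting_perm n N u = \<sigma>}))"

lemma rho_outside:
  assumes "odd N" "\<sigma> \<notin> signed_perms n"
  shows "rho n N \<sigma> = 0"
proof -
  have empty: "{u \<in> colourings N n. sorting_perm n N u = \<sigma>} = {}"
    using assms sorting_perm_signed_perm by blast
  show ?thesis unfolding rho_def empty by simp
qed

lemma gmult_card_fibres:
  assumes "finite A" "finite B" "f ` A \<subseteq> signed_perms n" "g ` B \<subseteq> signed_perms n"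
  shows "gmult n (\<lambda>\<pi>. of_nat (card {a \<in> A. f a = \<pi>})) (\<lambda>\<tau>. of_nat (card {b \<in> B. g b = \<tau>})) \<sigma>
       = of_nat (card {(a, b) \<in> A \<times> B. f a \<circ> g b = \<sigma>})"
proof -
  define T where "T = {(\<pi>, \<tau>) \<in> signed_perms n \<times> signed_perms n. \<pi> \<circ> \<tau> = \<sigma>}"
  define F where "F = (\<lambda>(\<pi>, \<tau>). {a \<in> A. f a = \<pi>} \<times> {b \<in> B. g b = \<tau>})"
  have "finite T"
    unfolding T_def
    by (rule finite_subset[OF _ finite_cartesian_product[OF finite_signed_perms
          finite_signed_perms]]) auto
  have "gmult n (\<lambda>\<pi>. of_nat (card {a \<in> A. f a = \<pi>})) (\<lambda>\<tau>. of_nat (card {b \<in> B. g b = \<tau>})) \<sigma>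
      = of_nat (\<Sum>p\<in>T. card (F p))"
    by (simp add: gmult_def T_def F_def card_cartesian_product case_prod_beta)
  also have "(\<Sum>p\<in>T. card (F p)) = card (\<Union> (F ` T))"
    by (rule card_UN_disjoint[symmetric]) (use \<open>finite T\<close> assms(1,2) in \<open>auto simp: F_def\<close>)
  also have "\<Union> (F ` T) = {(a, b) \<in> A \<times> B. f a \<circ> g b = \<sigma>}"
    using assms(3,4) by (auto simp: F_def T_def image_subset_iff)
  finally show ?thesis .
qed

lemma card_fibre_colouring_prod:
  assumes N: "odd N" "N \<ge> 1" and M: "odd M" "M \<ge> 1"
  shows "card {(u, v) \<in> colourings N n \<times> colourings M n. sorting_perm n N u \<circ> sorting_perm n M v = \<sigma>}
       = card {w \<in> colourings (N * M) n. sorting_perm n (N * M) w = \<sigma>}"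
proof (rule bij_betw_same_card, unfold bij_betw_def, intro conjI)
  let ?p = "\<lambda>(u, v). colouring_prod n N M u v"
  show "inj_on ?p {(u, v) \<in> colourings N n \<times> colourings M n.
      sorting_perm n N u \<circ> sorting_perm n M v = \<sigma>}"
    by (rule inj_on_subset[OF colouring_prod_inj[OF N M(1)]]) auto
  show "?p ` {(u, v) \<in> colourings N n \<times> colourings M n. sorting_perm n N u \<circ> sorting_perm n M v = \<sigma>}
      = {w \<in> colourings (N * M) n. sorting_perm n (N * M) w = \<sigma>}"
  proof
    show "{w \<in> colourings (N * M) n. sorting_perm n (N * M) w = \<sigma>}
        \<subseteq> ?p ` {(u, v) \<in> colourings N n \<times> colourings M n. sorting_perm n N u \<circ> sorting_perm n M v = \<sigma>}"
    proof
      fix w assume w: "w \<in> {w \<in> colourings (N * M) n. sorting_perm n (N * M) w = \<sigma>}"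
      then have "w \<in> ?p ` (colourings N n \<times> colourings M n)" using colouring_prod_image[OF N M]
        by simp
      then obtain u v where "u \<in> colourings N n" "v \<in> colourings M n" "w = colouring_prod n N M u v"
        by auto
      with w show "w \<in> ?p ` {(u, v) \<in> colourings N n \<times> colourings M n.
          sorting_perm n N u \<circ> sorting_perm n M v = \<sigma>}"
        using sorting_perm_colouring_prod[OF N M(1)] by force
    qed
  qed (use colouring_prod_in sorting_perm_colouring_prod N M in auto)
qed

lemma gmult_rho:
  assumes N: "odd N" "N \<ge> 1" and M: "odd M" "M \<ge> 1"
  shows "gmult n (rho n N) (rho n M) = rho n (N * M)"
proof
  fix \<sigma>
  have "gmult n (rho n N) (rho n M) \<sigma>
      = of_nat (card {(u, v) \<in> colourings N n \<times> colourings M n.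
          sorting_perm n N u \<circ> sorting_perm n M v = \<sigma>})"
    unfolding rho_def
    by (rule gmult_card_fibres) (use finite_colourings sorting_perm_signed_perm N M in auto)
  also have "\<dots> = rho n (N * M) \<sigma>"
    unfolding rho_def card_fibre_colouring_prod[OF N M] ..
  finally show "gmult n (rho n N) (rho n M) \<sigma> = rho n (N * M) \<sigma>" .
qed

section \<open>Counting the colourings sorted by a signed permutation\<close>

text \<open>A chain of length \<open>m\<close> is stored as a colouring \<open>v \<in> colourings N m\<close>; its colour sequence
  is \<open>(N + 1) div 2, v 1, \<dots>, v m\<close>.\<close>

definition chain_val :: "int \<Rightarrow> (int \<Rightarrow> int) \<Rightarrow> nat \<Rightarrow> int" where
  "chain_val N v j = (if j = 0 then (N + 1) div 2 else v (int j))"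

definition is_chain :: "int \<Rightarrow> (nat \<Rightarrow> bool) \<Rightarrow> nat \<Rightarrow> (int \<Rightarrow> int) \<Rightarrow> bool" where
  "is_chain N s m v \<longleftrightarrow> (\<forall>j<m. chain_step (s j) (chain_val N v j) (chain_val N v (Suc j)))"

lemma chain_val_upd: "j \<le> m \<Longrightarrow> chain_val N (v(1 + int m := c)) j = chain_val N v j"
  by (simp add: chain_val_def)

lemma chain_val_upd_same: "chain_val N (v(1 + int m := c)) (Suc m) = c"
  by (simp add: chain_val_def)

lemma is_chain_upd: "is_chain N s m (v(1 + int m := c)) = is_chain N s m v"
  unfolding is_chain_def by (auto simp: chain_val_upd)

lemma is_chain_Suc: "is_chain N s (Suc m) v
    \<longleftrightarrow> is_chain N s m v \<and> chain_step (s m) (chain_val N v m) (chain_val N v (Suc m))"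
  unfolding is_chain_def by (auto simp: less_Suc_eq)

lemma colourings_Suc_restrict:
  assumes "v \<in> colourings N (Suc m)"
  shows "v(1 + int m := undefined) \<in> colourings N m"
  using assms unfolding colourings_def by (auto simp: PiE_iff extensional_def)

lemma colourings_Suc_extend:
  assumes "v \<in> colourings N m" "z \<in> {1..N}"
  shows "v(1 + int m := z) \<in> colourings N (Suc m)"
  using assms unfolding colourings_def by (auto simp: PiE_iff extensional_def)

lemma colourings_undefined: "v \<in> colourings N m \<Longrightarrow> v (1 + int m) = undefined"
  unfolding colourings_def by (auto simp: PiE_iff extensional_def)

lemma chain_val_range: "v \<in> colourings N m \<Longrightarrow> N \<ge> 1 \<Longrightarrow> j \<le> m \<Longrightarrow> chain_val N v j \<in> {1..N}"
  unfolding colourings_def chain_val_def by (auto simp: PiE_iff)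

lemma card_chains_Suc:
  assumes z: "z \<in> {1..N}"
  shows "card {v \<in> colourings N (Suc m). is_chain N s (Suc m) v \<and> chain_val N v (Suc m) = z}
       = card {v \<in> colourings N m. is_chain N s m v \<and> chain_step (s m) (chain_val N v m) z}"
proof (rule bij_betw_same_card[where f = "\<lambda>v. v(1 + int m := undefined)"])
  show "bij_betw (\<lambda>v. v(1 + int m := undefined))
     {v \<in> colourings N (Suc m). is_chain N s (Suc m) v \<and> chain_val N v (Suc m) = z}
     {v \<in> colourings N m. is_chain N s m v \<and> chain_step (s m) (chain_val N v m) z}"
  proof (rule bij_betwI[where g = "\<lambda>v. v(1 + int m := z)"])
    show "(\<lambda>v. v(1 + int m := undefined))
        \<in> {v \<in> colourings N (Suc m). is_chain N s (Suc m) v \<and> chain_val N v (Suc m) = z}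
        \<rightarrow> {v \<in> colourings N m. is_chain N s m v \<and> chain_step (s m) (chain_val N v m) z}"
      using colourings_Suc_restrict by (auto simp: is_chain_Suc is_chain_upd chain_val_upd)
    show "(\<lambda>v. v(1 + int m := z))
        \<in> {v \<in> colourings N m. is_chain N s m v \<and> chain_step (s m) (chain_val N v m) z}
        \<rightarrow> {v \<in> colourings N (Suc m). is_chain N s (Suc m) v \<and> chain_val N v (Suc m) = z}"
      using colourings_Suc_extend[OF _ z]
      by (auto simp: is_chain_Suc is_chain_upd chain_val_upd chain_val_upd_same)
    show "v(1 + int m := undefined, 1 + int m := z) = v"
      if "v \<in> {v \<in> colourings N (Suc m). is_chain N s (Suc m) v \<and> chain_val N v (Suc m) = z}" for v
      using that by (auto simp: chain_val_def fun_eq_iff)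
    show "v(1 + int m := z, 1 + int m := undefined) = v"
      if "v \<in> {v \<in> colourings N m. is_chain N s m v \<and> chain_step (s m) (chain_val N v m) z}" for v
      using that colourings_undefined[of v N m] by (auto simp: fun_eq_iff)
  qed
qed

lemma colourings_0: "colourings N 0 = {\<lambda>_. undefined}"
  unfolding colourings_def by simp

lemma card_chains_ending:
  assumes N: "N \<ge> 1"
  shows "int (card {v \<in> colourings N m. is_chain N s m v \<and> chain_val N v m = z})
      = transfer_word N (middle_vector N) (map s [0..<m]) z"
proof (induction m arbitrary: z)
  case 0
  then show ?case by (simp add: colourings_0 is_chain_def chain_val_def middle_vector_def)
next
  case (Suc m)
  have map: "map s [0..<Suc m] = map s [0..<m] @ [s m]" by simp
  show ?case
  proof (cases "z \<in> {1..N}")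
    case False
    have "{v \<in> colourings N (Suc m). is_chain N s (Suc m) v \<and> chain_val N v (Suc m) = z} = {}"
      using chain_val_range[OF _ N, of _ "Suc m" "Suc m"] False by auto
    then have "card {v \<in> colourings N (Suc m). is_chain N s (Suc m) v \<and> chain_val N v (Suc m) = z} = 0"
      by (simp only: card.empty)
    moreover have "transfer_word N (middle_vector N) (map s [0..<Suc m]) z = 0"
      unfolding map transfer_word_snoc transfer_def using False by auto
    ultimately show ?thesis by simp
  next
    case True
    define S where "S = (\<lambda>y. {v \<in> colourings N m. is_chain N s m v \<and> chain_val N v m = y})"
    have "{v \<in> colourings N m. is_chain N s m v \<and> chain_step (s m) (chain_val N v m) z}
        = (\<Union>y\<in>{y\<in>{1..N}. chain_step (s m) y z}. S y)"
      unfolding S_def using chain_val_range[OF _ N, of _ m m] by auto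
    moreover have "card (\<Union>y\<in>{y\<in>{1..N}. chain_step (s m) y z}. S y)
        = (\<Sum>y\<in>{y\<in>{1..N}. chain_step (s m) y z}. card (S y))"
      by (rule card_UN_disjoint)
        (auto simp: S_def finite_colourings intro: finite_subset[of _ "{1..N}"])
    ultimately have "card {v \<in> colourings N m. is_chain N s m v \<and> chain_step (s m) (chain_val N v m) z}
        = (\<Sum>y\<in>{y\<in>{1..N}. chain_step (s m) y z}. card (S y))" by simp
    then have "int (card {v \<in> colourings N (Suc m). is_chain N s (Suc m) v \<and> chain_val N v (Suc m) = z})
        = (\<Sum>y\<in>{y\<in>{1..N}. chain_step (s m) y z}. transfer_word N (middle_vector N) (map s [0..<m]) y)"
      using card_chains_Suc[OF True] Suc.IH by (simp add: S_def)
    also have "\<dots> = (\<Sum>y\<in>{1..N}. if chain_step (s m) y z then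
        transfer_word N (middle_vector N) (map s [0..<m]) y else 0)"
      by (rule sum.inter_filter) simp
    also have "\<dots> = transfer N (s m) (transfer_word N (middle_vector N) (map s [0..<m])) z"
      using True by (simp add: transfer_def)
    finally show ?thesis by (simp add: map transfer_word_snoc)
  qed
qed

lemma card_chains:
  assumes N: "N \<ge> 1"
  shows "int (card {v \<in> colourings N m. is_chain N s m v})
      = transfer_total N (middle_vector N) (map s [0..<m])"
proof -
  define S where "S = (\<lambda>z. {v \<in> colourings N m. is_chain N s m v \<and> chain_val N v m = z})"
  have "{v \<in> colourings N m. is_chain N s m v} = (\<Union>z\<in>{1..N}. S z)"
    unfolding S_def using chain_val_range[OF _ N, of _ m m] by auto
  moreover have "card (\<Union>z\<in>{1..N}. S z) = (\<Sum>z\<in>{1..N}. card (S z))"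
    by (rule card_UN_disjoint) (auto simp: S_def finite_colourings)
  ultimately have "card {v \<in> colourings N m. is_chain N s m v} = (\<Sum>z\<in>{1..N}. card (S z))" by simp
  then show ?thesis using card_chains_ending[OF N] by (simp add: transfer_total_def S_def)
qed

definition ascent :: "(int \<Rightarrow> int) \<Rightarrow> nat \<Rightarrow> bool" where
  "ascent \<sigma> j = (\<sigma> (int j) < \<sigma> (int j + 1))"

definition ascent_word :: "nat \<Rightarrow> (int \<Rightarrow> int) \<Rightarrow> bool list" where
  "ascent_word n \<sigma> = map (ascent \<sigma>) [0..<n]"

text \<open>Reading the colours of \<open>u\<close> along \<open>\<sigma>\<close> is a bijection of the colourings under which
  ``\<open>\<sigma>\<close> sorts \<open>u\<close>'' becomes ``chain along the ascent word of \<open>\<sigma>\<close>''.\<close>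

definition colour_pullback :: "nat \<Rightarrow> int \<Rightarrow> (int \<Rightarrow> int) \<Rightarrow> (int \<Rightarrow> int) \<Rightarrow> int \<Rightarrow> int" where
  "colour_pullback n N \<sigma> u = (\<lambda>j. if j \<in> {1..int n} then colour N u (\<sigma> j) else undefined)"

lemma colour_less_iff_chain_step: "i \<noteq> j
    \<Longrightarrow> colour_less N u i j \<longleftrightarrow> chain_step (i < j) (colour N u i) (colour N u j)"
  unfolding colour_less_def tie_less_def chain_step_def by (cases "odd (colour N u i)") auto

lemma transp_adjacent_int:
  fixes lo hi a b :: int
  assumes "transp R" and adjacent: "\<And>a. lo \<le> a \<Longrightarrow> a < hi \<Longrightarrow> R (f a) (f (a + 1))"
    and "lo \<le> a" "a < b" "b \<le> hi"
  shows "R (f a) (f b)"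
  using \<open>a < b\<close> \<open>b \<le> hi\<close>
proof (induction b rule: int_gr_induct)
  case base
  then show ?case using adjacent \<open>lo \<le> a\<close> by simp
next
  case (step b)
  then show ?case using adjacent[of b] \<open>lo \<le> a\<close> transpD[OF \<open>transp R\<close>] by force
qed

lemma sorts_iff_adjacent:
  assumes s: "\<sigma> \<in> signed_perms n" and N: "odd N"
  shows "sorts n N u \<sigma> \<longleftrightarrow> (\<forall>j<n. colour_less N u (\<sigma> (int j)) (\<sigma> (int j + 1)))"
proof
  assume "sorts n N u \<sigma>"
  then show "\<forall>j<n. colour_less N u (\<sigma> (int j)) (\<sigma> (int j + 1))"
    unfolding sorts_def by auto
next
  assume nonneg: "\<forall>j<n. colour_less N u (\<sigma> (int j)) (\<sigma> (int j + 1))"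
  have adjacent: "colour_less N u (\<sigma> a) (\<sigma> (a + 1))" if "- int n \<le> a" "a < int n" for a
  proof (cases "0 \<le> a")
    case True
    then show ?thesis using nonneg that by (metis nonneg_int_cases of_nat_less_iff)
  next
    case False
    define k where "k = nat (- a - 1)"
    have k: "a = - (int k + 1)" "k < n" using False that by (auto simp: k_def)
    have "colour_less N u (\<sigma> (int k)) (\<sigma> (int k + 1))" using nonneg k(2) by blast
    then have "colour_less N u (- \<sigma> (int k + 1)) (- \<sigma> (int k))" using colour_less_neg[OF N] by simp
    moreover have "\<sigma> a = - \<sigma> (int k + 1)" "\<sigma> (a + 1) = - \<sigma> (int k)"
      using signed_perms_odd[OF s, of "int k + 1"] signed_perms_odd[OF s, of "int k"] k(1)
      by simp_all
    ultimately show ?thesis by simp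
  qed
  have "transp (colour_less N u)" by (rule transpI) (rule colour_less_trans)
  from transp_adjacent_int[of _ "- int n" "int n" \<sigma>, OF this adjacent] show "sorts n N u \<sigma>"
    unfolding sorts_def by auto
qed

lemma chain_val_colour_pullback: "\<sigma> \<in> signed_perms n \<Longrightarrow> j \<le> n
    \<Longrightarrow> chain_val N (colour_pullback n N \<sigma> u) j = colour N u (\<sigma> (int j))"
  unfolding chain_val_def colour_pullback_def using signed_perms_zero[of \<sigma> n]
  by (auto simp: colour_def)

lemma sorts_iff_is_chain:
  assumes s: "\<sigma> \<in> signed_perms n" and N: "odd N"
  shows "sorts n N u \<sigma> \<longleftrightarrow> is_chain N (ascent \<sigma>) n (colour_pullback n N \<sigma> u)"
proof -
  let ?v = "colour_pullback n N \<sigma> u"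
  have "colour_less N u (\<sigma> (int j)) (\<sigma> (int j + 1)) \<longleftrightarrow>
      chain_step (ascent \<sigma> j) (chain_val N ?v j) (chain_val N ?v (Suc j))"
    if j: "j < n" for j
  proof -
    have "\<sigma> (int j) \<noteq> \<sigma> (int j + 1)"
      using inj_onD[OF signed_perms_inj[OF s], of "int j" "int j + 1"] j by auto
    then show ?thesis
      using chain_val_colour_pullback[OF s, of j N u] chain_val_colour_pullback[OF s, of "Suc j" N u] j
      by (simp add: colour_less_iff_chain_step ascent_def add.commute)
  qed
  then show ?thesis unfolding sorts_iff_adjacent[OF s N] is_chain_def by auto
qed

lemma colour_pullback_in:
  assumes s: "\<sigma> \<in> signed_perms n" and N: "N \<ge> 1" and u: "u \<in> colourings N n"
  shows "colour_pullback n N \<sigma> u \<in> colourings N n"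
proof -
  have "colour N u (\<sigma> j) \<in> {1..N}" if "j \<in> {1..int n}" for j
    using colour_range[OF u N signed_perms_in[OF s]] that by auto
  then show ?thesis unfolding colourings_def colour_pullback_def by auto
qed

lemma colour_pullback_inj:
  assumes s: "\<sigma> \<in> signed_perms n" and N: "odd N"
  shows "inj_on (colour_pullback n N \<sigma>) (colourings N n)"
proof (rule inj_onI)
  fix u u' assume u: "u \<in> colourings N n"
      and u': "u' \<in> colourings N n" and eq: "colour_pullback n N \<sigma> u = colour_pullback n N \<sigma> u'"
  have e: "colour N u (\<sigma> j) = colour N u' (\<sigma> j)" if "j \<in> {1..int n}" for j
    using fun_cong[OF eq, of j] that by (simp add: colour_pullback_def)
  show "u = u'"
  proof (rule colourings_eqI[OF u u'])
    fix i assume i: "i \<in> {1..int n}"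
    then obtain j where j: "j \<in> sym_interval n" "\<sigma> j = i" using signed_perms_surj[OF s, of i]
      by auto
    have "j \<noteq> 0" using j i signed_perms_zero[OF s] by auto
    then consider "0 < j" | "j < 0" by linarith
    then show "u i = u' i"
    proof cases
      case 1 then show ?thesis using e[of j] j i by (auto simp: colour_def)
    next
      case 2
      have "\<sigma> (- j) = - i" using signed_perms_odd[OF s] j by simp
      then show ?thesis using e[of "- j"] j i 2 by (auto simp: colour_def)
    qed
  qed
qed

lemma card_sorts:
  assumes s: "\<sigma> \<in> signed_perms n" and N: "odd N" "N \<ge> 1"
  shows "card {u \<in> colourings N n. sorts n N u \<sigma>}
      = card {v \<in> colourings N n. is_chain N (ascent \<sigma>) n v}"
proof (rule bij_betw_same_card, rule bij_betw_Collect)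
  have "colour_pullback n N \<sigma> ` colourings N n = colourings N n"
    using finite_colourings colour_pullback_in[OF s N(2)] colour_pullback_inj[OF s N(1)]
    by (intro endo_inj_surj) auto
  then show "bij_betw (colour_pullback n N \<sigma>) (colourings N n) (colourings N n)"
    using colour_pullback_inj[OF s N(1)] by (simp add: bij_betw_def)
qed (rule sorts_iff_is_chain[OF s N(1), symmetric])

lemma rho_eq_transfer_total:
  assumes s: "\<sigma> \<in> signed_perms n" and N: "odd N" "N \<ge> 1"
  shows "rho n N \<sigma> = of_int (transfer_total N (middle_vector N) (ascent_word n \<sigma>))"
proof -
  have "{u \<in> colourings N n. sorting_perm n N u = \<sigma>} = {u \<in> colourings N n. sorts n N u \<sigma>}"
    using sorts_iff_sorting_perm[OF s] by auto
  then have "rho n N \<sigma> = of_nat (card {v \<in> colourings N n. is_chain N (ascent \<sigma>) n v})"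
    using s card_sorts[OF s N] by (simp add: rho_def)
  also have "\<dots> = of_int (int (card {v \<in> colourings N n. is_chain N (ascent \<sigma>) n v}))" by simp
  also have "\<dots> = of_int (transfer_total N (middle_vector N) (ascent_word n \<sigma>))"
    using card_chains[OF N(2)] by (simp add: ascent_word_def)
  finally show ?thesis .
qed

section \<open>Peak classes\<close>

lemma word_peaks_map: "word_peaks (map s [0..<m]) = card {i \<in> {1..<m}. s (i - 1) \<and> \<not> s i}"
proof (induction m)
  case (Suc m)
  let ?peak = "m \<ge> 1 \<and> s (m - 1) \<and> \<not> s m"
  have "word_peaks (map s [0..<Suc m]) = word_peaks (map s [0..<m] @ [s m])"
    by simp
  also have "\<dots> = word_peaks (map s [0..<m]) + of_bool ?peak"
    by (cases "m = 0") (simp_all add: word_peaks_snoc last_map)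
  moreover have "{i \<in> {1..<Suc m}. s (i - 1) \<and> \<not> s i}
      = (if ?peak then insert m else id) {i \<in> {1..<m}. s (i - 1) \<and> \<not> s i}"
    by (auto simp: less_Suc_eq)
  ultimately show ?case using Suc.IH by simp
qed simp

lemma peB_eq_word_peaks:
  assumes s: "\<sigma> \<in> signed_perms n"
  shows "peB n \<sigma> = word_peaks (ascent_word n \<sigma>)"
proof -
  have "{i \<in> {1..int n - 1}. \<sigma> (i - 1) < \<sigma> i \<and> \<sigma> i > \<sigma> (i + 1)}
      = int ` {i \<in> {1..<n}. ascent \<sigma> (i - 1) \<and> \<not> ascent \<sigma> i}"
  proof
    show "{i \<in> {1..int n - 1}. \<sigma> (i - 1) < \<sigma> i \<and> \<sigma> i > \<sigma> (i + 1)}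
        \<subseteq> int ` {i \<in> {1..<n}. ascent \<sigma> (i - 1) \<and> \<not> ascent \<sigma> i}"
    proof
      fix i assume i: "i \<in> {i \<in> {1..int n - 1}. \<sigma> (i - 1) < \<sigma> i \<and> \<sigma> i > \<sigma> (i + 1)}"
      define k where "k = nat i"
      have ik: "i = int k" "1 \<le> k" "k < n" using i unfolding k_def by auto
      have "int (k - 1) = i - 1" using ik by auto
      then have "ascent \<sigma> (k - 1) \<and> \<not> ascent \<sigma> k" using i ik by (auto simp: ascent_def)
      then show "i \<in> int ` {i \<in> {1..<n}. ascent \<sigma> (i - 1) \<and> \<not> ascent \<sigma> i}" using ik by auto
    qed
  next
    show "int ` {i \<in> {1..<n}. ascent \<sigma> (i - 1) \<and> \<not> ascent \<sigma> i}
        \<subseteq> {i \<in> {1..int n - 1}. \<sigma> (i - 1) < \<sigma> i \<and> \<sigma> i > \<sigma> (i + 1)}"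
    proof
      fix i assume "i \<in> int ` {i \<in> {1..<n}. ascent \<sigma> (i - 1) \<and> \<not> ascent \<sigma> i}"
      then obtain k where k: "i = int k" "1 \<le> k" "k < n" "ascent \<sigma> (k - 1)" "\<not> ascent \<sigma> k" by auto
      have "int (k - 1) = i - 1" using k by auto
      moreover have "\<sigma> (int k) \<noteq> \<sigma> (int k + 1)"
        using inj_onD[OF signed_perms_inj[OF s], of "int k" "int k + 1"] k by auto
      ultimately show "i \<in> {i \<in> {1..int n - 1}. \<sigma> (i - 1) < \<sigma> i \<and> \<sigma> i > \<sigma> (i + 1)}"
        using k by (auto simp: ascent_def)
    qed
  qed
  then have "peB n \<sigma> = card (int ` {i \<in> {1..<n}. ascent \<sigma> (i - 1) \<and> \<not> ascent \<sigma> i})"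
    by (simp add: peB_def)
  also have "\<dots> = card {i \<in> {1..<n}. ascent \<sigma> (i - 1) \<and> \<not> ascent \<sigma> i}" by (simp add: card_image)
  finally show ?thesis by (simp add: ascent_word_def word_peaks_map)
qed

definition peak_index :: "nat \<Rightarrow> (int \<Rightarrow> int) \<Rightarrow> nat" where
  "peak_index n \<sigma> = 2 * peB n \<sigma> + (if 0 < \<sigma> 1 then 0 else 1)"

lemma ascent_word_props:
  assumes s: "\<sigma> \<in> signed_perms n" and n: "n \<ge> 1"
  shows "ascent_word n \<sigma> \<noteq> []" "length (ascent_word n \<sigma>) = n"
    "hd (ascent_word n \<sigma>) = (0 < \<sigma> 1)"
  using n signed_perms_zero[OF s] by (auto simp: ascent_word_def ascent_def hd_map)

lemma peak_index_le:
  assumes s: "\<sigma> \<in> signed_perms n" and n: "n \<ge> 1"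
  shows "peak_index n \<sigma> \<le> n"
  using word_peaks_length_bound[OF ascent_word_props(1)[OF s n]] ascent_word_props[OF s n]
      peB_eq_word_peaks[OF s]
  unfolding peak_index_def by (auto split: if_splits)

lemma rho_eq_class_word:
  assumes s: "\<sigma> \<in> signed_perms n" and N: "odd N" "N \<ge> 1" and n: "n \<ge> 1"
  shows "rho n N \<sigma> = of_int (transfer_total N (middle_vector N) (class_word n (peak_index n \<sigma>)))"
proof -
  have t: "peak_index n \<sigma> \<le> n" by (rule peak_index_le[OF s n])
  have "transfer_total N (middle_vector N) (ascent_word n \<sigma>)
      = transfer_total N (middle_vector N) (class_word n (peak_index n \<sigma>))"
  proof (rule transfer_total_word_invariant[OF N(1) class_word_props(1)[OF t n]])
    show "length (ascent_word n \<sigma>) = length (class_word n (peak_index n \<sigma>))"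
      using class_word_props(2)[OF t n] ascent_word_props(2)[OF s n] by simp
    show "hd (ascent_word n \<sigma>) = hd (class_word n (peak_index n \<sigma>))"
      using class_word_props(3)[OF t n] ascent_word_props(3)[OF s n] by (simp add: peak_index_def)
    show "word_peaks (ascent_word n \<sigma>) = word_peaks (class_word n (peak_index n \<sigma>))"
      using class_word_props(4)[OF t n] peB_eq_word_peaks[OF s] by (simp add: peak_index_def)
  qed
  then show ?thesis using rho_eq_transfer_total[OF s N] by simp
qed

definition peak_class :: "nat \<Rightarrow> nat \<Rightarrow> (int \<Rightarrow> int) \<Rightarrow> rat" where
  "peak_class n t = (\<lambda>\<sigma>. if \<sigma> \<in> signed_perms n \<and> peak_index n \<sigma> = t then 1 else 0)"

lemma Eplus_eq_peak_class: "Eplus n i = peak_class n (2 * i)"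
  by (auto simp: fun_eq_iff Eplus_def peak_class_def peak_index_def) presburger

lemma Eminus_eq_peak_class:
  assumes "n \<ge> 1"
  shows "Eminus n i = peak_class n (2 * i + 1)"
proof
  fix \<sigma>
  have "\<sigma> 1 \<noteq> 0" if "\<sigma> \<in> signed_perms n"
    using signed_perms_nonzero[OF that, of 1] assms by auto
  moreover have "2 * p + (if 0 < x then 0 else 1) = 2 * i + 1 \<longleftrightarrow> p = i \<and> \<not> 0 < x"
    for p :: nat and x :: int
    by presburger
  ultimately show "Eminus n i \<sigma> = peak_class n (2 * i + 1) \<sigma>"
    by (auto simp: Eminus_def peak_class_def peak_index_def)
qed

lemma peak_class_beyond: "n \<ge> 1 \<Longrightarrow> n < t \<Longrightarrow> peak_class n t = 0"
  using peak_index_le[of _ n] by (force simp: peak_class_def fun_eq_iff)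

lemma peak_algebra_B_eq_span_peak_class:
  assumes n: "n \<ge> 1"
  shows "peak_algebra_B n = qv.span (peak_class n ` {..n})"
proof -
  let ?G = "{Eplus n i | i. i \<le> n div 2} \<union> {Eminus n i | i. i \<le> n div 2}"
  have "Eplus n i \<in> peak_class n ` {..n}" if "i \<le> n div 2" for i
  proof -
    have "2 * i \<le> n" using that times_div_less_eq_dividend[of 2 n] by linarith
    then show ?thesis by (simp add: Eplus_eq_peak_class)
  qed
  moreover have "Eminus n i \<in> insert 0 (peak_class n ` {..n})" for i
  proof (cases "2 * i + 1 \<le> n")
    case False
    then show ?thesis by (simp add: Eminus_eq_peak_class[OF n] peak_class_beyond[OF n])
  qed (simp add: Eminus_eq_peak_class[OF n])
  ultimately have "?G \<subseteq> insert 0 (peak_class n ` {..n})" by blast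
  then have "qv.span ?G \<subseteq> qv.span (insert 0 (peak_class n ` {..n}))"
    by (rule qv.span_mono)
  then have "qv.span ?G \<subseteq> qv.span (peak_class n ` {..n})"
    by (simp only: qv.span_insert_0)
  moreover have "peak_class n t \<in> ?G" if "t \<le> n" for t
  proof -
    have "t div 2 \<le> n div 2" using that by (rule div_le_mono)
    moreover have "peak_class n t = (if even t then Eplus n (t div 2) else Eminus n (t div 2))"
      by (simp add: Eplus_eq_peak_class Eminus_eq_peak_class[OF n])
    ultimately show ?thesis by auto
  qed
  then have "qv.span (peak_class n ` {..n}) \<subseteq> qv.span ?G"
    by (intro qv.span_mono) auto
  ultimately show ?thesis unfolding peak_algebra_B_def by blast
qed

lemma sum_apply: "sum f A x = (\<Sum>a\<in>A. f a x)"
  by (induction A rule: infinite_finite_induct) auto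

definition rho_coeff :: "nat \<Rightarrow> int \<Rightarrow> nat \<Rightarrow> rat" where
  "rho_coeff n N t = of_int (transfer_total N (middle_vector N) (class_word n t))"

lemma rho_eq_sum_peak_class:
  assumes N: "odd N" "N \<ge> 1" and n: "n \<ge> 1"
  shows "rho n N = (\<Sum>t\<le>n. qscale (rho_coeff n N t) (peak_class n t))"
proof
  fix \<sigma>
  show "rho n N \<sigma> = (\<Sum>t\<le>n. qscale (rho_coeff n N t) (peak_class n t)) \<sigma>"
  proof (cases "\<sigma> \<in> signed_perms n")
    case True
    have "(\<Sum>t\<le>n. qscale (rho_coeff n N t) (peak_class n t)) \<sigma>
        = (\<Sum>t\<le>n. if t = peak_index n \<sigma> then rho_coeff n N t else 0)"
      unfolding sum_apply by (rule sum.cong) (auto simp: qscale_def peak_class_def True)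
    also have "\<dots> = rho_coeff n N (peak_index n \<sigma>)"
      using peak_index_le[OF True n] by simp
    finally show ?thesis using rho_eq_class_word[OF True N n] by (simp add: rho_coeff_def)
  next
    case False
    then show ?thesis by (simp add: sum_apply rho_outside[OF N(1)] qscale_def peak_class_def)
  qed
qed

lemma rho_coeff_vanish:
  assumes "t < s" "s \<le> n" "n \<ge> 1"
  shows "rho_coeff n (2 * int t + 1) s = 0"
proof -
  have "2 * word_peaks (class_word n s) + of_bool (\<not> hd (class_word n s)) = s"
    using class_word_props(3,4)[of s n] assms by auto
  then show ?thesis
    using transfer_total_vanish[OF class_word_props(1), of s n t] assms by (simp add: rho_coeff_def)
qed

lemma rho_coeff_diag_nonzero: "rho_coeff n (2 * int t + 1) t \<noteq> 0"
  using transfer_total_class_word_pos[of t n] by (simp add: rho_coeff_def)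

definition rho_set :: "nat \<Rightarrow> ((int \<Rightarrow> int) \<Rightarrow> rat) set" where
  "rho_set n = {rho n N | N. odd N \<and> N \<ge> 1}"

lemma peak_class_in_span_rho_set:
  assumes n: "n \<ge> 1"
  shows "t \<le> n \<Longrightarrow> peak_class n t \<in> qv.span (rho_set n)"
proof (induction t rule: less_induct)
  case (less t)
  define N where "N = 2 * int t + 1"
  have N: "odd N" "N \<ge> 1" unfolding N_def by auto
  define c where "c = rho_coeff n N t"
  have c: "c \<noteq> 0" unfolding c_def N_def by (rule rho_coeff_diag_nonzero)
  define rest where "rest = (\<Sum>s\<in>{..n} - {t}. qscale (rho_coeff n N s) (peak_class n s))"
  have rho_N: "rho n N = qscale c (peak_class n t) + rest"
    unfolding rho_eq_sum_peak_class[OF N n] rest_def c_def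
    using less.prems by (simp add: sum.remove[of "{..n}" t])
  have "rest \<in> qv.span (rho_set n)"
    unfolding rest_def
  proof (rule qv.span_sum)
    fix s assume s: "s \<in> {..n} - {t}"
    show "qscale (rho_coeff n N s) (peak_class n s) \<in> qv.span (rho_set n)"
    proof (cases "s < t")
      case True
      then show ?thesis using less.IH[of s] less.prems by (intro qv.span_scale) auto
    next
      case False
      then have "rho_coeff n N s = 0" unfolding N_def using s n by (intro rho_coeff_vanish) auto
      then show ?thesis by (simp add: qv.span_zero)
    qed
  qed
  moreover have "rho n N \<in> qv.span (rho_set n)" using N
    by (intro qv.span_base) (auto simp: rho_set_def)
  moreover have "peak_class n t = qscale (inverse c) (rho n N - rest)"
    unfolding rho_N using c by (simp add: qscale_def fun_eq_iff)
  ultimately show ?case by (simp add: qv.span_scale qv.span_diff)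
qed

lemma span_peak_class_eq_span_rho_set:
  assumes n: "n \<ge> 1"
  shows "qv.span (peak_class n ` {..n}) = qv.span (rho_set n)"
proof
  show "qv.span (peak_class n ` {..n}) \<subseteq> qv.span (rho_set n)"
    using peak_class_in_span_rho_set[OF n] by (intro qv.span_minimal) auto
  have "rho n N \<in> qv.span (peak_class n ` {..n})" if "odd N" "N \<ge> 1" for N
    unfolding rho_eq_sum_peak_class[OF that n]
    by (intro qv.span_sum qv.span_scale qv.span_base) auto
  then show "qv.span (rho_set n) \<subseteq> qv.span (peak_class n ` {..n})"
    by (intro qv.span_minimal) (auto simp: rho_set_def)
qed

section \<open>Closure under multiplication\<close>

lemma gmult_add_left: "gmult n (a + a') b = gmult n a b + gmult n a' b"
  by (simp add: gmult_def fun_eq_iff sum.distrib[symmetric] case_prod_beta algebra_simps)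

lemma gmult_add_right: "gmult n a (b + b') = gmult n a b + gmult n a b'"
  by (simp add: gmult_def fun_eq_iff sum.distrib[symmetric] case_prod_beta algebra_simps)

lemma gmult_scale_left: "gmult n (qscale c a) b = qscale c (gmult n a b)"
  by (simp add: gmult_def qscale_def fun_eq_iff sum_distrib_left case_prod_beta algebra_simps)

lemma gmult_scale_right: "gmult n a (qscale c b) = qscale c (gmult n a b)"
  by (simp add: gmult_def qscale_def fun_eq_iff sum_distrib_left case_prod_beta algebra_simps)

lemma gmult_zero_left: "gmult n 0 b = 0"
  by (simp add: gmult_def fun_eq_iff)

lemma gmult_zero_right: "gmult n a 0 = 0"
  by (simp add: gmult_def fun_eq_iff)

lemma gmult_span_closed_commute:
  assumes R: "\<And>r r'. r \<in> R \<Longrightarrow> r' \<in> R \<Longrightarrow> gmult n r r' \<in> R \<and> gmult n r r' = gmult n r' r"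
    and a: "a \<in> qv.span R" and b: "b \<in> qv.span R"
  shows "gmult n a b \<in> qv.span R \<and> gmult n a b = gmult n b a"
proof -
  have subspace: "qv.subspace {b. gmult n a b \<in> qv.span R \<and> gmult n a b = gmult n b a}" for a
    unfolding qv.subspace_def
    by (auto simp: gmult_add_left gmult_add_right gmult_scale_left gmult_scale_right
        gmult_zero_left gmult_zero_right qv.span_zero qv.span_add qv.span_scale)
  have with_base: "gmult n a r \<in> qv.span R \<and> gmult n a r = gmult n r a" if "r \<in> R" for r
    using qv.span_subspace_induct[OF a subspace[of r]] R[OF _ that] qv.span_base by fastforce
  show ?thesis
    using qv.span_subspace_induct[OF b subspace[of a]] with_base by blast
qed

lemma gmult_rho_set:
  assumes "r \<in> rho_set n" "r' \<in> rho_set n"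
  shows "gmult n r r' \<in> rho_set n \<and> gmult n r r' = gmult n r' r"
proof -
  obtain N M where NM: "r = rho n N" "odd N" "N \<ge> 1" "r' = rho n M" "odd M" "M \<ge> 1"
    using assms by (auto simp: rho_set_def)
  have "(1::int) * 1 \<le> N * M" by (rule mult_mono) (use NM in auto)
  then have "odd (N * M)" "N * M \<ge> 1" using NM by auto
  then show ?thesis using NM gmult_rho by (auto simp: rho_set_def mult.commute)
qed

section \<open>Representatives of the peak classes\<close>

text \<open>With \<open>K = n - 2 * (t div 2)\<close>, the one-line notation of \<open>class_rep n t\<close> is
  \<open>\<plusminus>1, \<dots>, \<plusminus>K, K + 2, K + 1, K + 4, K + 3, \<dots>\<close> (sign \<open>+\<close> iff \<open>t\<close> is even); its ascent word
  is \<open>class_word n t\<close>.\<close>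

definition class_rep_abs :: "nat \<Rightarrow> nat \<Rightarrow> int \<Rightarrow> int" where
  "class_rep_abs n t k = (let K = int n - 2 * int (t div 2) in
     if k \<le> K then (if even t then k else - k) else if even (k - K) then k - 1 else k + 1)"

definition class_rep :: "nat \<Rightarrow> nat \<Rightarrow> int \<Rightarrow> int" where
  "class_rep n t i = (if i \<in> sym_interval n then sgn i * class_rep_abs n t \<bar>i\<bar> else i)"

lemma class_rep_abs_cases:
  assumes "t \<le> n" "1 \<le> k" "k \<le> int n"
  obtains "class_rep_abs n t k = (if even t then k else - k)"
  | "class_rep_abs n t k = k - 1" "class_rep_abs n t (k - 1) = k" "2 \<le> k"
  | "class_rep_abs n t k = k + 1" "class_rep_abs n t (k + 1) = k" "k + 1 \<le> int n"
proof -
  define K where "K = int n - 2 * int (t div 2)"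
  have "0 \<le> K" "even (int n - K)" using assms(1) unfolding K_def by auto
  then have "k \<le> K \<or> (K < k \<and> even (k - K) \<and> K + 2 \<le> k) \<or> (K < k \<and> odd (k - K) \<and> k + 1 \<le> int n)"
    using assms(2,3) by presburger
  with that \<open>0 \<le> K\<close> assms(2) show thesis
    unfolding class_rep_abs_def K_def[symmetric] Let_def by (auto split: if_splits)
qed

lemma class_rep_odd: "class_rep n t (- i) = - class_rep n t i"
  by (simp add: class_rep_def)

lemma class_rep_pos: "1 \<le> k \<Longrightarrow> k \<le> int n \<Longrightarrow> class_rep n t k = class_rep_abs n t k"
  by (simp add: class_rep_def)

lemma class_rep_pos_in_and_involution:
  assumes "t \<le> n" "1 \<le> k" "k \<le> int n"
  shows "class_rep n t k \<in> sym_interval n \<and> class_rep n t (class_rep n t k) = k"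
proof (rule class_rep_abs_cases[OF assms])
  assume "class_rep_abs n t k = (if even t then k else - k)"
  then show ?thesis using assms(2,3) by (simp add: class_rep_pos class_rep_odd)
next
  assume "class_rep_abs n t k = k - 1" "class_rep_abs n t (k - 1) = k" "2 \<le> k"
  then show ?thesis using assms(2,3) by (simp add: class_rep_pos)
next
  assume "class_rep_abs n t k = k + 1" "class_rep_abs n t (k + 1) = k" "k + 1 \<le> int n"
  then show ?thesis using assms(2,3) by (simp add: class_rep_pos)
qed

lemma class_rep_in_and_involution:
  assumes "t \<le> n" "i \<in> sym_interval n"
  shows "class_rep n t i \<in> sym_interval n \<and> class_rep n t (class_rep n t i) = i"
proof -
  consider "1 \<le> i" | "1 \<le> - i" | "i = 0" by linarith
  then show ?thesis
  proof cases
    case 1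
    then show ?thesis using class_rep_pos_in_and_involution[OF assms(1) 1] assms(2) by simp
  next
    case 2
    then have "class_rep n t (- i) \<in> sym_interval n \<and> class_rep n t (class_rep n t (- i)) = - i"
      using class_rep_pos_in_and_involution[OF assms(1) 2] assms(2) by simp
    then show ?thesis by (simp add: class_rep_odd)
  next
    case 3
    then show ?thesis by (simp add: class_rep_def)
  qed
qed

lemma class_rep_signed_perm:
  assumes "t \<le> n"
  shows "class_rep n t \<in> signed_perms n"
proof -
  have "bij_betw (class_rep n t) (sym_interval n) (sym_interval n)"
  proof (rule bij_betw_byWitness[where f' = "class_rep n t"])
    show "\<forall>i\<in>sym_interval n. class_rep n t (class_rep n t i) = i"
      and "\<forall>i\<in>sym_interval n. class_rep n t (class_rep n t i) = i"
      and "class_rep n t ` sym_interval n \<subseteq> sym_interval n"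
      and "class_rep n t ` sym_interval n \<subseteq> sym_interval n"
      using class_rep_in_and_involution[OF assms] by blast+
  qed
  moreover have "\<forall>i. class_rep n t (- i) = - class_rep n t i" by (simp add: class_rep_odd)
  moreover have "\<forall>i. \<bar>i\<bar> > int n \<longrightarrow> class_rep n t i = i" by (auto simp: class_rep_def abs_if)
  ultimately show ?thesis unfolding signed_perms_def by blast
qed

lemma ascent_class_rep:
  assumes "t \<le> n" "j < n"
  defines "K \<equiv> n - 2 * (t div 2)"
  shows "ascent (class_rep n t) j = (if j < K then even t else even (j - K))"
proof -
  have K: "int K = int n - 2 * int (t div 2)" "even (n - K)"
    using assms(1) unfolding K_def by auto
  have val: "class_rep n t k = (if k \<le> int K then (if even t then k else - k)
      else if even (k - int K) then k - 1 else k + 1)" if "1 \<le> k" "k \<le> int n" for k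
    using that by (simp add: class_rep_pos class_rep_abs_def Let_def K(1))
  have zero: "class_rep n t 0 = 0" by (simp add: class_rep_def)
  consider "j < K" | "j = K" | "K < j" "even (j - K)" | "K < j" "odd (j - K)" by linarith
  then show ?thesis
  proof cases
    case 1
    then show ?thesis using assms(2) by (cases "j = 0") (auto simp: ascent_def val zero)
  next
    case 2
    then show ?thesis using assms(2) by (cases "j = 0") (auto simp: ascent_def val zero)
  next
    case 3
    then have "int j - int K = int (j - K)" "int j + 1 - int K = int (j - K) + 1" by auto
    with 3 have "even (int j - int K)" "odd (int j + 1 - int K)" by simp_all
    then have "class_rep n t (int j) = int j - 1" "class_rep n t (int j + 1) = int j + 2"
      using val[of "int j"] val[of "int j + 1"] 3 assms(2) by simp_all
    with 3 show ?thesis by (simp add: ascent_def)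
  next
    case 4
    then have "int j - int K = int (j - K)" "int j + 1 - int K = int (j - K) + 1" by auto
    with 4 have "odd (int j - int K)" "even (int j + 1 - int K)" by simp_all
    then have "class_rep n t (int j) = int j + 1" "class_rep n t (int j + 1) = int j"
      using val[of "int j"] val[of "int j + 1"] 4 assms(2) K(2) by simp_all
    with 4 show ?thesis by (simp add: ascent_def)
  qed
qed

lemma nth_zigzag: "m < 2 * p \<Longrightarrow> zigzag p ! m = even m"
proof (induction p arbitrary: m)
  case (Suc p)
  consider "m = 0" | "m = 1" | m' where "m = Suc (Suc m')" by (metis One_nat_def not0_implies_Suc)
  then show ?case using Suc by cases (auto simp: zigzag_Suc)
qed simp

lemma ascent_word_class_rep:
  assumes "t \<le> n"
  shows "ascent_word n (class_rep n t) = class_word n t"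
proof (rule nth_equalityI)
  have "2 * (t div 2) \<le> n" using assms by linarith
  then show "length (ascent_word n (class_rep n t)) = length (class_word n t)"
    by (simp add: ascent_word_def class_word_def zigzag_def length_concat sum_list_replicate)
  fix j assume "j < length (ascent_word n (class_rep n t))"
  then have "j < n" by (simp add: ascent_word_def)
  with \<open>2 * (t div 2) \<le> n\<close> show "ascent_word n (class_rep n t) ! j = class_word n t ! j"
    by (auto simp: ascent_word_def ascent_class_rep[OF assms] class_word_def nth_append nth_zigzag)
qed

lemma peak_index_class_rep:
  assumes t: "t \<le> n" and n: "n \<ge> 1"
  shows "peak_index n (class_rep n t) = t"
proof -
  have s: "class_rep n t \<in> signed_perms n" by (rule class_rep_signed_perm[OF t])
  have "peB n (class_rep n t) = t div 2"
    using peB_eq_word_peaks[OF s] ascent_word_class_rep[OF t] class_word_props(4)[OF t n] by simp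
  moreover have "(0 < class_rep n t 1) = even t"
    using ascent_word_props(3)[OF s n] ascent_word_class_rep[OF t] class_word_props(3)[OF t n]
    by simp
  ultimately show ?thesis unfolding peak_index_def by auto
qed

lemma peak_class_at_class_rep:
  "t \<le> n \<Longrightarrow> n \<ge> 1 \<Longrightarrow> peak_class n s (class_rep n t) = (if s = t then 1 else 0)"
  unfolding peak_class_def using class_rep_signed_perm[of t n] peak_index_class_rep[of t n] by auto

lemma inj_on_peak_class: "n \<ge> 1 \<Longrightarrow> inj_on (peak_class n) {..n}"
  by (rule inj_onI) (metis atMost_iff peak_class_at_class_rep zero_neq_one)

lemma independent_peak_class:
  assumes n: "n \<ge> 1"
  shows "qv.independent (peak_class n ` {..n})"
  unfolding qv.dependent_finite[OF finite_imageI[OF finite_atMost]]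
proof
  assume "\<exists>c. (\<exists>v\<in>peak_class n ` {..n}. c v \<noteq> 0) \<and> (\<Sum>v\<in>peak_class n ` {..n}. qscale (c v) v) = 0"
  then obtain c t where t: "t \<in> {..n}" "c (peak_class n t) \<noteq> 0"
    and sum0: "(\<Sum>v\<in>peak_class n ` {..n}. qscale (c v) v) = 0"
    by auto
  have "0 = (\<Sum>v\<in>peak_class n ` {..n}. qscale (c v) v) (class_rep n t)" using sum0 by simp
  also have "\<dots> = (\<Sum>s\<le>n. c (peak_class n s) * peak_class n s (class_rep n t))"
    by (simp add: sum_apply qscale_def sum.reindex[OF inj_on_peak_class[OF n]])
  also have "\<dots> = (\<Sum>s\<le>n. if s = t then c (peak_class n s) else 0)"
    by (rule sum.cong) (use t n in \<open>auto simp: peak_class_at_class_rep\<close>)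
  also have "\<dots> = c (peak_class n t)"
    using t by simp
  finally show False using t(2) by simp
qed

theorem corollary3p9:
  fixes n :: nat
  assumes "n \<ge> 1"
  shows "(\<forall>a \<in> peak_algebra_B n. \<forall>b \<in> peak_algebra_B n.
            gmult n a b \<in> peak_algebra_B n \<and> gmult n a b = gmult n b a)
         \<and> qv.dim (peak_algebra_B n) = n + 1"
proof
  have span_rho: "peak_algebra_B n = qv.span (rho_set n)"
    using peak_algebra_B_eq_span_peak_class[OF assms] span_peak_class_eq_span_rho_set[OF assms]
    by simp
  show "\<forall>a \<in> peak_algebra_B n. \<forall>b \<in> peak_algebra_B n.
            gmult n a b \<in> peak_algebra_B n \<and> gmult n a b = gmult n b a"
    unfolding span_rho using gmult_span_closed_commute[OF gmult_rho_set] by blast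
  have "qv.dim (peak_algebra_B n) = card (peak_class n ` {..n})"
    unfolding peak_algebra_B_eq_span_peak_class[OF assms]
    by (rule qv.dim_span_eq_card_independent[OF independent_peak_class[OF assms]])
  also have "\<dots> = n + 1" using card_image[OF inj_on_peak_class[OF assms]] by simp
  finally show "qv.dim (peak_algebra_B n) = n + 1" .
qed

end
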